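(* Let $n\ge 2$ and let $S$ be $\mathcal{PI}^{\ast}_n$ or $\overline{\mathcal{PI}^{\ast}}_n$. Up to equivalence, $S$ has exactly one faithful effective transitive representation, and it is a representation into $\mathcal{I}_{2^n-1}$ (i.e. the corresponding set of right cosets has $2^n-1$ elements). In particular, $\mathcal{PI}^{\ast}_n$ and $\overline{\mathcal{PI}^{\ast}}_n$ embed into the symmetric inverse semigroup $\mathcal{I}_{2^n-1}$.
   Context: Let $X=\{1,\dots,n\}$, $X'=\{1',\dots,n'\}$, and let $P_n$ be the set of partitions of $X\cup X'$ each of whose blocks is a singleton (point) or a generalised line (a set meeting both $X$ and $X'$). $\mathcal{PI}^{\ast}_n=(P_n,\star)$, where (with $X''$ a third copy of $X$, regarding $\alpha$ as a partition of $X\cup X''$ and $\beta$ of $X''\cup X'$, and $\sim$ the equivalence on $X\cup X''\cup X'$ generated by the blocks of both) $\alpha\star\beta$ is the partition of $X\cup X'$ in which distinct $u,v$ are in one block iff $u\sim v$ and the $\sim$-class of $u$ contains no singleton block of $\alpha$ or $\beta$. $\overline{\mathcal{PI}^{\ast}}_n=(P_n,\circ)$, where $\alpha\circ\beta$ has as generalised lines exactly the sets $A\cup D'$ with $A\cup B'$ a generalised line of $\alpha$ and $B\cup D'$ a generalised line of $\beta$ (same $B$), other elements being points. Both are inverse semigroups. For an inverse semigroup $S$: the natural partial order is $s\le t$ iff $s=et$ for some idempotent $e$; for $H\subseteq S$, $H\varrho=\{s\in S: s\ge h\text{ for some }h\in H\}$; a closed inverse subsemigroup is an inverse subsemigroup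 $H$ with $H\varrho=H$; $\mathcal{C}_H=\{(Hs)\varrho: ss^{-1}\in H\}$; the effective transitive representation $\phi_H:S\to\mathcal{I}_{\mathcal{C}_H}$ (symmetric inverse semigroup of partial bijections of $\mathcal{C}_H$) is $\phi_H(s)=\{((Hx)\varrho,(Hxs)\varrho): (Hx)\varrho,(Hxs)\varrho\in\mathcal{C}_H\}$; $\phi_H$ and $\phi_K$ are equivalent iff there is $a\in S$ with $a^{-1}Ha\subseteq K$ and $aKa^{-1}\subseteq H$. *)

theory Defs
  imports Main "HOL-Library.Disjoint_Sets"
begin

text \<open>Points of X \<union> X': (i, False) is i \<in> X, (i, True) is i' \<in> X'.
  An element of P_n is a partition, i.e. a set of blocks.\<close>

type_synonym pt = "nat \<times> bool"
type_synonym part = "pt set set"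

definition Xs :: "nat \<Rightarrow> pt set" where "Xs n = {1..n} \<times> {False}"
definition Xp :: "nat \<Rightarrow> pt set" where "Xp n = {1..n} \<times> {True}"

definition is_point :: "'a set \<Rightarrow> bool" where "is_point B \<longleftrightarrow> card B = 1"

definition is_gline :: "nat \<Rightarrow> pt set \<Rightarrow> bool" where
  "is_gline n B \<longleftrightarrow> B \<inter> Xs n \<noteq> {} \<and> B \<inter> Xp n \<noteq> {}"

definition Pn :: "nat \<Rightarrow> part set" where
  "Pn n = {P. partition_on (Xs n \<union> Xp n) P \<and> (\<forall>B\<in>P. is_point B \<or> is_gline n B)}"

text \<open>Three copies X (tag 0), X'' (tag 1), X' (tag 2).\<close>
definition embL :: "part \<Rightarrow> (nat \<times> nat) set set" where
  "embL \<alpha> = (\<lambda>B. (\<lambda>(i,b). (i, if b then 1 else 0)) ` B) ` \<alpha>"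
definition embR :: "part \<Rightarrow> (nat \<times> nat) set set" where
  "embR \<beta> = (\<lambda>B. (\<lambda>(i,b). (i, if b then 2 else 1)) ` B) ` \<beta>"

definition simrel :: "part \<Rightarrow> part \<Rightarrow> ((nat \<times> nat) \<times> (nat \<times> nat)) set" where
  "simrel \<alpha> \<beta> = ({(u,v). \<exists>B \<in> embL \<alpha> \<union> embR \<beta>. u \<in> B \<and> v \<in> B})\<^sup>*"

definition good :: "part \<Rightarrow> part \<Rightarrow> nat \<times> nat \<Rightarrow> bool" where
  "good \<alpha> \<beta> u \<longleftrightarrow> (\<forall>B \<in> embL \<alpha> \<union> embR \<beta>. is_point B \<longrightarrow> (\<forall>w\<in>B. (u,w) \<notin> simrel \<alpha> \<beta>))"

definition outpt :: "nat \<times> nat \<Rightarrow> pt" where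
  "outpt u = (fst u, snd u = 2)"

definition outset :: "nat \<Rightarrow> (nat \<times> nat) set" where
  "outset n = {1..n} \<times> {0, 2}"

definition PIstar :: "nat \<Rightarrow> part \<Rightarrow> part \<Rightarrow> part" where
  "PIstar n \<alpha> \<beta> =
     (\<lambda>u. outpt ` {v \<in> outset n. v = u \<or> ((u,v) \<in> simrel \<alpha> \<beta> \<and> good \<alpha> \<beta> u)}) ` outset n"

definition mkblk :: "nat set \<Rightarrow> nat set \<Rightarrow> pt set" where
  "mkblk A D = (A \<times> {False}) \<union> (D \<times> {True})"

definition topp :: "pt set \<Rightarrow> nat set" where "topp L = {i. (i, False) \<in> L}"
definition botp :: "pt set \<Rightarrow> nat set" where "botp L = {i. (i, True) \<in> L}"

definition lines_circ :: "nat \<Rightarrow> part \<Rightarrow> part \<Rightarrow> part" where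
  "lines_circ n \<alpha> \<beta> = {mkblk (topp La) (botp Lb) | La Lb.
      La \<in> \<alpha> \<and> is_gline n La \<and> Lb \<in> \<beta> \<and> is_gline n Lb \<and> botp La = topp Lb}"

definition PIbar :: "nat \<Rightarrow> part \<Rightarrow> part \<Rightarrow> part" where
  "PIbar n \<alpha> \<beta> = lines_circ n \<alpha> \<beta> \<union>
     {{x} | x. x \<in> Xs n \<union> Xp n \<and> x \<notin> \<Union>(lines_circ n \<alpha> \<beta>)}"

definition idem :: "'a set \<Rightarrow> ('a \<Rightarrow> 'a \<Rightarrow> 'a) \<Rightarrow> 'a \<Rightarrow> bool" where
  "idem S m e \<longleftrightarrow> e \<in> S \<and> m e e = e"

definition sinv :: "'a set \<Rightarrow> ('a \<Rightarrow> 'a \<Rightarrow> 'a) \<Rightarrow> 'a \<Rightarrow> 'a" where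
  "sinv S m s = (THE t. t \<in> S \<and> m (m s t) s = s \<and> m (m t s) t = t)"

definition nleq :: "'a set \<Rightarrow> ('a \<Rightarrow> 'a \<Rightarrow> 'a) \<Rightarrow> 'a \<Rightarrow> 'a \<Rightarrow> bool" where
  "nleq S m s t \<longleftrightarrow> (\<exists>e. idem S m e \<and> s = m e t)"

definition upc :: "'a set \<Rightarrow> ('a \<Rightarrow> 'a \<Rightarrow> 'a) \<Rightarrow> 'a set \<Rightarrow> 'a set" where
  "upc S m H = {s \<in> S. \<exists>h\<in>H. nleq S m h s}"

definition inv_subsemigroup :: "'a set \<Rightarrow> ('a \<Rightarrow> 'a \<Rightarrow> 'a) \<Rightarrow> 'a set \<Rightarrow> bool" where
  "inv_subsemigroup S m H \<longleftrightarrow> H \<noteq> {} \<and> H \<subseteq> S \<and> (\<forall>x\<in>H. \<forall>y\<in>H. m x y \<in> H)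
      \<and> (\<forall>x\<in>H. sinv S m x \<in> H)"

definition closed_inv_sub :: "'a set \<Rightarrow> ('a \<Rightarrow> 'a \<Rightarrow> 'a) \<Rightarrow> 'a set \<Rightarrow> bool" where
  "closed_inv_sub S m H \<longleftrightarrow> inv_subsemigroup S m H \<and> upc S m H = H"

definition rcoset :: "('a \<Rightarrow> 'a \<Rightarrow> 'a) \<Rightarrow> 'a set \<Rightarrow> 'a \<Rightarrow> 'a set" where
  "rcoset m H s = (\<lambda>h. m h s) ` H"

definition cosets :: "'a set \<Rightarrow> ('a \<Rightarrow> 'a \<Rightarrow> 'a) \<Rightarrow> 'a set \<Rightarrow> 'a set set" where
  "cosets S m H = {upc S m (rcoset m H s) | s. s \<in> S \<and> m s (sinv S m s) \<in> H}"

definition phi :: "'a set \<Rightarrow> ('a \<Rightarrow> 'a \<Rightarrow> 'a) \<Rightarrow> 'a set \<Rightarrow> 'a \<Rightarrow> ('a set \<times> 'a set) set" where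
  "phi S m H s = {(upc S m (rcoset m H x), upc S m (rcoset m H (m x s))) | x.
       x \<in> S \<and> upc S m (rcoset m H x) \<in> cosets S m H \<and> upc S m (rcoset m H (m x s)) \<in> cosets S m H}"

definition rep_equiv :: "'a set \<Rightarrow> ('a \<Rightarrow> 'a \<Rightarrow> 'a) \<Rightarrow> 'a set \<Rightarrow> 'a set \<Rightarrow> bool" where
  "rep_equiv S m H K \<longleftrightarrow> (\<exists>a\<in>S. (\<lambda>h. m (m (sinv S m a) h) a) ` H \<subseteq> K
                                  \<and> (\<lambda>k. m (m a k) (sinv S m a)) ` K \<subseteq> H)"

end

theory Submission
  imports Defs
begin

text \<open>
  Both products let \<open>P\<^sub>n\<close> act faithfully by partial bijections on the \<open>2\<^sup>n - 1\<close> nonempty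
  subsets of \<open>{1..n}\<close>: under \<open>\<circ>\<close> the partition \<open>\<alpha>\<close> sends \<open>A\<close> to \<open>B\<close> when \<open>A \<union> B'\<close> is a
  generalised line of \<open>\<alpha>\<close>, under \<open>\<star>\<close> when \<open>A \<union> B'\<close> is a union of generalised lines of \<open>\<alpha>\<close>.
  In both cases the image is closed under inversion (transposition) and contains every
  rank-one partial bijection (a partition with a single generalised line).

  For such a representation on a finite set \<open>Q\<close> with at least two points, the stabiliser
  \<open>H\<^sub>a\<close> of a point is a closed inverse subsemigroup whose cosets are the transporters
  \<open>{s. a\<cdot>s = b}\<close>, so \<open>\<phi>\<^bsub>H\<^sub>a\<^esub>\<close> is a copy of the given representation; the \<open>H\<^sub>a\<close> are
  conjugate by rank-one elements. Conversely, let \<open>\<phi>\<^sub>K\<close> be faithful and let \<open>D\<close> be the least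
  domain of an idempotent of \<open>K\<close>. If \<open>D = {}\<close> then \<open>K = S\<close> and \<open>\<phi>\<^sub>K\<close> is trivial; if \<open>D\<close> has
  two points, every coset representative is defined on both of them, so every rank-one
  element acts as the empty map. Hence \<open>D = {a}\<close>, and then \<open>K = H\<^sub>a\<close>.
\<close>

section \<open>Partial bijections\<close>

definition pbij :: "('a \<times> 'b) set \<Rightarrow> bool" where
  "pbij r \<longleftrightarrow> single_valued r \<and> single_valued (r\<inverse>)"

lemma pbij_functional: "pbij r \<Longrightarrow> (a, b) \<in> r \<Longrightarrow> (a, c) \<in> r \<Longrightarrow> b = c"
  unfolding pbij_def single_valued_def by blast

lemma pbij_injective: "pbij r \<Longrightarrow> (a, c) \<in> r \<Longrightarrow> (b, c) \<in> r \<Longrightarrow> a = b"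
  unfolding pbij_def single_valued_def by blast

lemma pbij_converse: "pbij r \<Longrightarrow> pbij (r\<inverse>)"
  unfolding pbij_def by simp

lemma pbij_relcomp_converse: "pbij r \<Longrightarrow> r O r\<inverse> = Id_on (Domain r)"
  by (auto dest: pbij_injective)

lemma pbij_relcomp_converse_relcomp: "pbij r \<Longrightarrow> r O r\<inverse> O r = r"
  by (auto dest: pbij_injective)

lemma pbij_inverse_unique:
  assumes "pbij r" "pbij s" "r O s O r = r" "s O r O s = s"
  shows "s = r\<inverse>"
proof (intro equalityI subsetI)
  fix p assume "p \<in> r\<inverse>"
  then obtain a b where p: "p = (b, a)" "(a, b) \<in> r" by auto
  with assms(3) obtain x y where "(a, x) \<in> r" "(x, y) \<in> s" "(y, b) \<in> r" by blast
  with p assms(1) show "p \<in> s" by (metis pbij_functional pbij_injective)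
next
  fix p assume "p \<in> s"
  then obtain a b where p: "p = (a, b)" "(a, b) \<in> s" by (cases p) auto
  with assms(4) obtain x y where "(a, x) \<in> s" "(x, y) \<in> r" "(y, b) \<in> s" by blast
  with p assms(2) show "p \<in> r\<inverse>" by (metis pbij_functional pbij_injective converse_iff)
qed

lemma pbij_idempotent_iff:
  assumes "pbij r" shows "r O r = r \<longleftrightarrow> r \<subseteq> Id"
proof
  assume idem: "r O r = r"
  show "r \<subseteq> Id"
  proof
    fix p assume "p \<in> r"
    then obtain a b where p: "p = (a, b)" "(a, b) \<in> r" by (cases p) auto
    with idem obtain x where "(a, x) \<in> r" "(x, b) \<in> r" by blast
    with p assms show "p \<in> Id" by (metis pbij_functional pbij_injective IdI)
  qed
qed auto

lemma Id_on_Domain_relcomp: "r \<subseteq> s \<Longrightarrow> single_valued s \<Longrightarrow> Id_on (Domain r) O s = r"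
  unfolding single_valued_def by auto

lemma image_map_prod_relcomp:
  assumes "inj_on f (Range r \<union> Domain s)"
  shows "map_prod f f ` (r O s) = map_prod f f ` r O map_prod f f ` s"
proof (intro equalityI subsetI)
  fix p assume "p \<in> map_prod f f ` r O map_prod f f ` s"
  then obtain a b c d where p: "p = (f a, f d)" "(a, b) \<in> r" "(c, d) \<in> s" "f b = f c"
    by (auto simp: relcomp_unfold)
  with assms have "b = c" by (blast dest: inj_onD)
  with p show "p \<in> map_prod f f ` (r O s)" by blast
qed force

section \<open>Inverse semigroups represented by partial bijections\<close>

locale pbij_rep =
  fixes S :: "'a set" and mult :: "'a \<Rightarrow> 'a \<Rightarrow> 'a"
    and Q :: "'q set" and Phi :: "'a \<Rightarrow> ('q \<times> 'q) set"
  assumes card_Q: "2 \<le> card Q" \<comment> \<open>in particular \<open>Q\<close> is finite\<close>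
    and mult_closed: "s \<in> S \<Longrightarrow> t \<in> S \<Longrightarrow> mult s t \<in> S"
    and Phi_mult: "s \<in> S \<Longrightarrow> t \<in> S \<Longrightarrow> Phi (mult s t) = Phi s O Phi t"
    and inj_Phi: "inj_on Phi S"
    and Phi_subset: "s \<in> S \<Longrightarrow> Phi s \<subseteq> Q \<times> Q"
    and pbij_Phi: "s \<in> S \<Longrightarrow> pbij (Phi s)"
    and Phi_converse: "s \<in> S \<Longrightarrow> \<exists>t\<in>S. Phi t = (Phi s)\<inverse>"
    and Phi_rank_one: "a \<in> Q \<Longrightarrow> b \<in> Q \<Longrightarrow> \<exists>s\<in>S. Phi s = {(a, b)}"
begin

lemma finite_Q: "finite Q"
  using card_Q by (metis card.infinite not_numeral_le_zero)

lemma exists_other: "\<exists>c\<in>Q. c \<noteq> b"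
proof (rule ccontr)
  assume "\<not> (\<exists>c\<in>Q. c \<noteq> b)"
  then have "card Q \<le> card {b}" by (intro card_mono) auto
  with card_Q show False by simp
qed

lemma Phi_eqD: "s \<in> S \<Longrightarrow> t \<in> S \<Longrightarrow> Phi s = Phi t \<Longrightarrow> s = t"
  using inj_Phi by (auto dest: inj_onD)

lemma sinv_eq:
  assumes s: "s \<in> S" and t: "t \<in> S" "Phi t = (Phi s)\<inverse>"
  shows "sinv S mult s = t"
  unfolding sinv_def
proof (rule the_equality)
  have "Phi (mult (mult s t) s) = Phi s" "Phi (mult (mult t s) t) = Phi t"
    using s t pbij_relcomp_converse_relcomp[OF pbij_Phi[OF s]]
      pbij_relcomp_converse_relcomp[OF pbij_converse[OF pbij_Phi[OF s]]]
    by (simp_all add: Phi_mult mult_closed O_assoc)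
  then show "t \<in> S \<and> mult (mult s t) s = s \<and> mult (mult t s) t = t"
    using s t by (simp add: Phi_eqD mult_closed)
next
  fix t' assume "t' \<in> S \<and> mult (mult s t') s = s \<and> mult (mult t' s) t' = t'"
  then have t': "t' \<in> S" and "Phi (mult (mult s t') s) = Phi s" "Phi (mult (mult t' s) t') = Phi t'"
    by simp_all
  then have "Phi s O Phi t' O Phi s = Phi s" "Phi t' O Phi s O Phi t' = Phi t'"
    using s by (simp_all add: Phi_mult mult_closed O_assoc)
  then have "Phi t' = Phi t"
    using pbij_inverse_unique[OF pbij_Phi[OF s] pbij_Phi[OF t']] t by simp
  then show "t' = t" using t t' Phi_eqD by blast
qed

lemma sinv_closed_Phi_sinv:
  assumes "s \<in> S" shows "sinv S mult s \<in> S" "Phi (sinv S mult s) = (Phi s)\<inverse>"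
proof -
  obtain t where "t \<in> S" "Phi t = (Phi s)\<inverse>" using Phi_converse[OF assms] by blast
  with sinv_eq[OF assms] show "sinv S mult s \<in> S" "Phi (sinv S mult s) = (Phi s)\<inverse>" by simp_all
qed

lemmas sinv_closed = sinv_closed_Phi_sinv(1) and Phi_sinv = sinv_closed_Phi_sinv(2)

lemma Phi_mult_sinv: "s \<in> S \<Longrightarrow> Phi (mult s (sinv S mult s)) = Id_on (Domain (Phi s))"
  by (simp add: Phi_mult sinv_closed Phi_sinv pbij_relcomp_converse pbij_Phi)

lemma idem_iff: "idem S mult e \<longleftrightarrow> e \<in> S \<and> Phi e \<subseteq> Id"
proof (cases "e \<in> S")
  case True
  then have "mult e e = e \<longleftrightarrow> Phi e O Phi e = Phi e"
    by (metis Phi_mult Phi_eqD mult_closed)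
  then show ?thesis unfolding idem_def using True pbij_idempotent_iff pbij_Phi by blast
qed (simp add: idem_def)

lemma nleq_iff:
  assumes t: "t \<in> S" shows "nleq S mult s t \<longleftrightarrow> s \<in> S \<and> Phi s \<subseteq> Phi t"
proof
  assume "nleq S mult s t"
  then obtain e where "e \<in> S" "Phi e \<subseteq> Id" "s = mult e t"
    unfolding nleq_def idem_iff by blast
  with t show "s \<in> S \<and> Phi s \<subseteq> Phi t" by (auto simp: Phi_mult mult_closed)
next
  assume s: "s \<in> S \<and> Phi s \<subseteq> Phi t"
  define e where "e = mult s (sinv S mult s)"
  have e: "e \<in> S" "Phi e = Id_on (Domain (Phi s))"
    using s by (simp_all add: e_def mult_closed sinv_closed Phi_mult_sinv)
  then have "Phi (mult e t) = Phi s"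
    using s t Id_on_Domain_relcomp[of "Phi s" "Phi t"] pbij_Phi[OF t]
    by (simp add: Phi_mult pbij_def)
  then have "s = mult e t" using s e t by (simp add: Phi_eqD mult_closed)
  with e show "nleq S mult s t" unfolding nleq_def idem_iff by auto
qed

lemma upc_eq: "H \<subseteq> S \<Longrightarrow> upc S mult H = {t \<in> S. \<exists>h\<in>H. Phi h \<subseteq> Phi t}"
  unfolding upc_def using nleq_iff by blast

lemma rcoset_subset: "H \<subseteq> S \<Longrightarrow> x \<in> S \<Longrightarrow> rcoset mult H x \<subseteq> S"
  unfolding rcoset_def using mult_closed by auto

definition rank_one :: "'q \<Rightarrow> 'q \<Rightarrow> 'a" where
  "rank_one a b = (SOME s. s \<in> S \<and> Phi s = {(a, b)})"

lemma rank_one: "a \<in> Q \<Longrightarrow> b \<in> Q \<Longrightarrow> rank_one a b \<in> S \<and> Phi (rank_one a b) = {(a, b)}"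
  unfolding rank_one_def using Phi_rank_one by (rule someI2_bex) auto

definition transporter :: "'q \<Rightarrow> 'q \<Rightarrow> 'a set" where
  "transporter a b = {s \<in> S. (a, b) \<in> Phi s}"

abbreviation stab :: "'q \<Rightarrow> 'a set" where
  "stab a \<equiv> transporter a a"

lemma upc_rcoset_stab:
  assumes a: "a \<in> Q" and x: "x \<in> S"
  shows "upc S mult (rcoset mult (stab a) x) = {t \<in> S. \<forall>b. (a, b) \<in> Phi x \<longrightarrow> (a, b) \<in> Phi t}"
proof -
  have sub: "stab a \<subseteq> S" unfolding transporter_def by auto
  have "upc S mult (rcoset mult (stab a) x) = {t \<in> S. \<exists>h\<in>stab a. Phi (mult h x) \<subseteq> Phi t}"
    using upc_eq[OF rcoset_subset[OF sub x]] by (simp add: rcoset_def)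
  also have "\<dots> = {t \<in> S. \<forall>b. (a, b) \<in> Phi x \<longrightarrow> (a, b) \<in> Phi t}"
  proof (intro Collect_cong conj_cong refl iffI)
    fix t
    assume "t \<in> S" "\<forall>b. (a, b) \<in> Phi x \<longrightarrow> (a, b) \<in> Phi t"
    then have "Phi (mult (rank_one a a) x) \<subseteq> Phi t" using rank_one[OF a a] x by (auto simp: Phi_mult)
    moreover have "rank_one a a \<in> stab a" using rank_one[OF a a] unfolding transporter_def by auto
    ultimately show "\<exists>h\<in>stab a. Phi (mult h x) \<subseteq> Phi t" by blast
  qed (use x in \<open>auto simp: transporter_def Phi_mult\<close>)
  finally show ?thesis .
qed

lemma upc_rcoset_stab_eq_transporter:
  assumes "a \<in> Q" "x \<in> S" "(a, b) \<in> Phi x"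
  shows "upc S mult (rcoset mult (stab a) x) = transporter a b"
  using upc_rcoset_stab[OF assms(1,2)] pbij_functional[OF pbij_Phi[OF assms(2)] assms(3)] assms(3)
  unfolding transporter_def by blast

lemma upc_rcoset_stab_eq_carrier:
  assumes "a \<in> Q" "x \<in> S" "a \<notin> Domain (Phi x)"
  shows "upc S mult (rcoset mult (stab a) x) = S"
  using assms by (simp add: upc_rcoset_stab Domain_iff)

lemma inj_on_transporter: "a \<in> Q \<Longrightarrow> inj_on (transporter a) Q"
proof (rule inj_onI)
  fix b c assume "a \<in> Q" "b \<in> Q" "c \<in> Q" "transporter a b = transporter a c"
  moreover have "rank_one a b \<in> transporter a b"
    using rank_one[OF \<open>a \<in> Q\<close> \<open>b \<in> Q\<close>] unfolding transporter_def by simp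
  ultimately have "(a, c) \<in> Phi (rank_one a b)" unfolding transporter_def by blast
  then show "b = c" using rank_one[OF \<open>a \<in> Q\<close> \<open>b \<in> Q\<close>] by simp
qed

lemma transporter_neq_carrier:
  assumes "a \<in> Q" "b \<in> Q" shows "transporter a b \<noteq> S"
proof -
  obtain c where "c \<in> Q" "c \<noteq> b" using exists_other by blast
  then have "rank_one a c \<notin> transporter a b" using rank_one[OF assms(1)] unfolding transporter_def by auto
  then show ?thesis using rank_one[OF assms(1) \<open>c \<in> Q\<close>] by blast
qed

lemma cosets_stab: assumes a: "a \<in> Q" shows "cosets S mult (stab a) = transporter a ` Q"
proof (intro equalityI subsetI)
  fix c assume "c \<in> cosets S mult (stab a)"
  then obtain s where s: "s \<in> S" "mult s (sinv S mult s) \<in> stab a"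
    "c = upc S mult (rcoset mult (stab a) s)"
    unfolding cosets_def by auto
  then obtain b where "(a, b) \<in> Phi s" by (auto simp: transporter_def Phi_mult_sinv)
  moreover from this have "b \<in> Q" using Phi_subset[OF s(1)] by auto
  ultimately show "c \<in> transporter a ` Q" using upc_rcoset_stab_eq_transporter[OF a s(1)] s(3) by auto
next
  fix c assume "c \<in> transporter a ` Q"
  then obtain b where b: "b \<in> Q" "c = transporter a b" by auto
  have "mult (rank_one a b) (sinv S mult (rank_one a b)) \<in> stab a"
    using rank_one[OF a b(1)] by (auto simp: transporter_def Phi_mult_sinv mult_closed sinv_closed)
  moreover have "c = upc S mult (rcoset mult (stab a) (rank_one a b))"
    using upc_rcoset_stab_eq_transporter[OF a] rank_one[OF a b(1)] b by auto
  ultimately show "c \<in> cosets S mult (stab a)" unfolding cosets_def using rank_one[OF a b(1)] by auto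
qed

lemma card_cosets_stab: "a \<in> Q \<Longrightarrow> card (cosets S mult (stab a)) = card Q"
  by (simp add: cosets_stab card_image inj_on_transporter)

lemma upc_rcoset_stab_in_cosets:
  assumes a: "a \<in> Q" and x: "x \<in> S"
  shows "upc S mult (rcoset mult (stab a) x) \<in> cosets S mult (stab a) \<longleftrightarrow> a \<in> Domain (Phi x)"
proof
  assume "a \<in> Domain (Phi x)"
  then obtain b where "(a, b) \<in> Phi x" by auto
  moreover from this have "b \<in> Q" using Phi_subset[OF x] by auto
  ultimately show "upc S mult (rcoset mult (stab a) x) \<in> cosets S mult (stab a)"
    using upc_rcoset_stab_eq_transporter[OF a x] cosets_stab[OF a] by auto
next
  assume "upc S mult (rcoset mult (stab a) x) \<in> cosets S mult (stab a)"
  then show "a \<in> Domain (Phi x)"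
    using upc_rcoset_stab_eq_carrier[OF a x] transporter_neq_carrier[OF a]
    unfolding cosets_stab[OF a] by fastforce
qed

lemma phi_stab:
  assumes a: "a \<in> Q" and s: "s \<in> S"
  shows "phi S mult (stab a) s = map_prod (transporter a) (transporter a) ` Phi s"
proof (intro equalityI subsetI)
  fix p assume "p \<in> phi S mult (stab a) s"
  then obtain x where x: "x \<in> S"
    "p = (upc S mult (rcoset mult (stab a) x), upc S mult (rcoset mult (stab a) (mult x s)))"
    "upc S mult (rcoset mult (stab a) x) \<in> cosets S mult (stab a)"
    "upc S mult (rcoset mult (stab a) (mult x s)) \<in> cosets S mult (stab a)"
    unfolding phi_def by auto
  have xs: "mult x s \<in> S" using x s mult_closed by auto
  obtain b where b: "(a, b) \<in> Phi x" using upc_rcoset_stab_in_cosets[OF a x(1)] x(3) by auto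
  obtain d where d: "(a, d) \<in> Phi (mult x s)" using upc_rcoset_stab_in_cosets[OF a xs] x(4) by auto
  then have "(b, d) \<in> Phi s" using b x s pbij_Phi[OF x(1)] by (auto simp: Phi_mult dest: pbij_functional)
  moreover have "p = (transporter a b, transporter a d)"
    using x(2) upc_rcoset_stab_eq_transporter[OF a] x(1) xs b d by simp
  ultimately show "p \<in> map_prod (transporter a) (transporter a) ` Phi s" by force
next
  fix p assume "p \<in> map_prod (transporter a) (transporter a) ` Phi s"
  then obtain b d where bd: "(b, d) \<in> Phi s" "p = (transporter a b, transporter a d)" by auto
  have b: "b \<in> Q" using bd Phi_subset[OF s] by auto
  let ?x = "rank_one a b"
  have x: "?x \<in> S" "(a, b) \<in> Phi ?x" using rank_one[OF a b] by auto
  have xs: "mult ?x s \<in> S" "(a, d) \<in> Phi (mult ?x s)" using x s bd by (auto simp: Phi_mult mult_closed)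
  have "upc S mult (rcoset mult (stab a) ?x) = transporter a b"
    "upc S mult (rcoset mult (stab a) (mult ?x s)) = transporter a d"
    "upc S mult (rcoset mult (stab a) ?x) \<in> cosets S mult (stab a)"
    "upc S mult (rcoset mult (stab a) (mult ?x s)) \<in> cosets S mult (stab a)"
    using x xs upc_rcoset_stab_eq_transporter[OF a] upc_rcoset_stab_in_cosets[OF a] by blast+
  then show "p \<in> phi S mult (stab a) s" unfolding phi_def using x(1) bd(2) by blast
qed

lemma stab_closed:
  assumes "a \<in> Q" shows "closed_inv_sub S mult (stab a)"
proof -
  have "stab a \<subseteq> S" unfolding transporter_def by auto
  moreover have "rank_one a a \<in> stab a" using rank_one[OF assms assms] unfolding transporter_def by auto
  ultimately show ?thesis
    unfolding closed_inv_sub_def inv_subsemigroup_def upc_eq[OF \<open>stab a \<subseteq> S\<close>]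
    by (auto simp: transporter_def Phi_mult mult_closed sinv_closed Phi_sinv)
qed

lemma inj_on_phi_stab: assumes a: "a \<in> Q" shows "inj_on (phi S mult (stab a)) S"
proof (rule inj_onI)
  fix s t assume st: "s \<in> S" "t \<in> S" "phi S mult (stab a) s = phi S mult (stab a) t"
  have "inj_on (map_prod (transporter a) (transporter a)) (Q \<times> Q)"
    using map_prod_inj_on[OF inj_on_transporter[OF a] inj_on_transporter[OF a]] .
  then have "Phi s = Phi t"
    using st Phi_subset phi_stab[OF a] by (metis inj_on_image_eq_iff)
  then show "s = t" using st Phi_eqD by auto
qed

lemma phi_stab_mult:
  assumes a: "a \<in> Q" and st: "s \<in> S" "t \<in> S"
  shows "phi S mult (stab a) (mult s t) = phi S mult (stab a) s O phi S mult (stab a) t"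
proof -
  have "inj_on (transporter a) (Range (Phi s) \<union> Domain (Phi t))"
    by (rule inj_on_subset[OF inj_on_transporter[OF a]]) (use Phi_subset st in blast)
  then show ?thesis
    by (simp add: phi_stab[OF a] st mult_closed Phi_mult image_map_prod_relcomp)
qed

lemma rep_equiv_stab:
  assumes a: "a \<in> Q" and b: "b \<in> Q" shows "rep_equiv S mult (stab a) (stab b)"
proof -
  let ?g = "rank_one a b"
  have g: "?g \<in> S" "Phi ?g = {(a, b)}" "sinv S mult ?g \<in> S" "Phi (sinv S mult ?g) = {(b, a)}"
    using rank_one[OF a b] by (auto simp: sinv_closed Phi_sinv)
  have "(\<lambda>h. mult (mult (sinv S mult ?g) h) ?g) ` stab a \<subseteq> stab b"
    using g by (auto simp: transporter_def Phi_mult mult_closed relcomp_unfold)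
  moreover have "(\<lambda>k. mult (mult ?g k) (sinv S mult ?g)) ` stab b \<subseteq> stab a"
    using g by (auto simp: transporter_def Phi_mult mult_closed relcomp_unfold)
  ultimately show ?thesis unfolding rep_equiv_def using g by blast
qed

lemma closed_inv_subD:
  assumes "closed_inv_sub S mult K"
  shows "K \<subseteq> S" "\<And>k. k \<in> K \<Longrightarrow> k \<in> S" "K \<noteq> {}"
    "\<And>k l. k \<in> K \<Longrightarrow> l \<in> K \<Longrightarrow> mult k l \<in> K"
    "\<And>k. k \<in> K \<Longrightarrow> sinv S mult k \<in> K"
    "\<And>k t. k \<in> K \<Longrightarrow> t \<in> S \<Longrightarrow> Phi k \<subseteq> Phi t \<Longrightarrow> t \<in> K"
  using assms upc_eq[of K] unfolding closed_inv_sub_def inv_subsemigroup_def by blast+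

text \<open>The idempotents of a closed inverse subsemigroup are the identities on the domains of its
  elements; since these domains are closed under intersection, there is a least one.\<close>

lemma closed_least_domain:
  assumes K: "closed_inv_sub S mult K"
  obtains f where "f \<in> K" "Phi f = Id_on (Domain (Phi f))"
    "\<And>k. k \<in> K \<Longrightarrow> Domain (Phi f) \<subseteq> Domain (Phi k)"
proof -
  note K' = closed_inv_subD[OF K]
  obtain k where k: "k \<in> K"
    and least: "\<And>l. l \<in> K \<Longrightarrow> card (Domain (Phi k)) \<le> card (Domain (Phi l))"
    using ex_has_least_nat[of "\<lambda>k. k \<in> K" _ "\<lambda>k. card (Domain (Phi k))"] K'(3) by blast
  define f where "f = mult k (sinv S mult k)"
  have f: "f \<in> K" "Phi f = Id_on (Domain (Phi k))"
    using k K'(2,4,5) Phi_mult_sinv[of k] by (auto simp: f_def)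
  have "Domain (Phi k) \<subseteq> Domain (Phi l)" if l: "l \<in> K" for l
  proof -
    have "Phi (mult f l) = Id_on (Domain (Phi k)) O Phi l"
      using f l K'(2) by (simp add: Phi_mult)
    then have "Domain (Phi (mult f l)) = Domain (Phi k) \<inter> Domain (Phi l)" by blast
    then have "card (Domain (Phi k)) \<le> card (Domain (Phi k) \<inter> Domain (Phi l))"
      using least[of "mult f l"] K'(4)[OF f(1) l] by simp
    moreover have "finite (Domain (Phi k))"
      using Phi_subset[OF K'(2)[OF k]] finite_Q by (auto intro: finite_subset)
    ultimately show ?thesis by (metis Int_lower1 Int_lower2 card_seteq)
  qed
  then show thesis using that f by simp
qed

lemma closed_least_domain_cosets:
  assumes K: "closed_inv_sub S mult K" and f: "f \<in> K" "Phi f \<subseteq> Id"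
    and least: "\<And>k. k \<in> K \<Longrightarrow> Domain (Phi f) \<subseteq> Domain (Phi k)"
    and x: "x \<in> S" "upc S mult (rcoset mult K x) \<in> cosets S mult K"
  shows "Domain (Phi f) \<subseteq> Domain (Phi x)"
proof -
  note K' = closed_inv_subD[OF K]
  obtain s where s: "s \<in> S" "mult s (sinv S mult s) \<in> K"
    "upc S mult (rcoset mult K x) = upc S mult (rcoset mult K s)"
    using x(2) unfolding cosets_def by auto
  have "Phi (mult f x) \<subseteq> Phi x" using f x K'(2) by (auto simp: Phi_mult)
  then have "x \<in> upc S mult (rcoset mult K x)"
    using upc_eq[OF rcoset_subset[OF K'(1) x(1)]] x(1) f(1) unfolding rcoset_def by blast
  then obtain k where k: "k \<in> K" "Phi (mult k s) \<subseteq> Phi x"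
    using upc_eq[OF rcoset_subset[OF K'(1) s(1)]] s(3) unfolding rcoset_def by auto
  define g where "g = mult (mult k (mult s (sinv S mult s))) (sinv S mult k)"
  have "g \<in> K" unfolding g_def using K'(4,5) k s by blast
  then have "Domain (Phi f) \<subseteq> Domain (Phi g)" by (rule least)
  also have "\<dots> \<subseteq> Domain (Phi (mult k s))"
    unfolding g_def using k K'(2) s by (auto simp: Phi_mult mult_closed sinv_closed)
  also have "\<dots> \<subseteq> Domain (Phi x)" using k(2) by blast
  finally show ?thesis .
qed

lemma phi_closed_trivial:
  assumes K: "closed_inv_sub S mult K" and f: "f \<in> K" "Phi f = {}" and s: "s \<in> S"
  shows "phi S mult K s = {(S, S)}"
proof -
  note K' = closed_inv_subD[OF K]
  have upc_rcoset: "upc S mult (rcoset mult K x) = S" if "x \<in> S" for x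
  proof -
    have "Phi (mult f x) = {}" using f that K'(2) by (simp add: Phi_mult)
    then show ?thesis
      using upc_eq[OF rcoset_subset[OF K'(1) that]] f(1) unfolding rcoset_def by auto
  qed
  have "mult s (sinv S mult s) \<in> K" using K'(6)[OF f(1)] f(2) s by (simp add: mult_closed sinv_closed)
  then have "S \<in> cosets S mult K"
    unfolding cosets_def using s upc_rcoset[OF s] by blast
  moreover have "mult s s \<in> S" using mult_closed[OF s s] .
  ultimately have "(S, S) \<in> phi S mult K s"
    unfolding phi_def using s upc_rcoset by fastforce
  then show ?thesis unfolding phi_def using upc_rcoset s by (auto simp: mult_closed)
qed

lemma phi_closed_rank_one_empty:
  assumes K: "closed_inv_sub S mult K" and f: "f \<in> K" "Phi f \<subseteq> Id"
    and least: "\<And>k. k \<in> K \<Longrightarrow> Domain (Phi f) \<subseteq> Domain (Phi k)"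
    and ab: "a \<in> Domain (Phi f)" "b \<in> Domain (Phi f)" "a \<noteq> b"
    and E: "E \<in> S" "Phi E = {(c, d)}"
  shows "phi S mult K E = {}"
proof (rule ccontr)
  assume "phi S mult K E \<noteq> {}"
  then obtain x where x: "x \<in> S" "upc S mult (rcoset mult K (mult x E)) \<in> cosets S mult K"
    unfolding phi_def by auto
  have "Domain (Phi f) \<subseteq> Domain (Phi (mult x E))"
    using closed_least_domain_cosets[OF K f least] x E mult_closed by blast
  then have "(a, c) \<in> Phi x" "(b, c) \<in> Phi x" using ab x E by (auto simp: Phi_mult)
  then show False using ab pbij_Phi[OF x(1)] by (auto dest: pbij_injective)
qed

lemma closed_eq_stab:
  assumes K: "closed_inv_sub S mult K" and f: "f \<in> K" "Phi f = {(a, a)}"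
    and least: "\<And>k. k \<in> K \<Longrightarrow> Domain (Phi f) \<subseteq> Domain (Phi k)"
  shows "K = stab a"
proof
  note K' = closed_inv_subD[OF K]
  show "stab a \<subseteq> K" using K'(6)[OF f(1)] f(2) unfolding transporter_def by auto
  show "K \<subseteq> stab a"
  proof
    fix k assume k: "k \<in> K"
    obtain b where b: "(a, b) \<in> Phi k" using least[OF k] f by auto
    define h where "h = mult f k"
    have "Phi h = {(a, a)} O Phi k" using f k K'(2) by (simp add: h_def Phi_mult)
    also have "\<dots> = {(a, b)}" using b pbij_functional[OF pbij_Phi[OF K'(2)[OF k]] b] by blast
    finally have h: "h \<in> K" "Phi h = {(a, b)}" using K'(4)[OF f(1) k] by (simp_all add: h_def)
    have "Phi (mult (sinv S mult h) h) = {(b, b)}"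
      using h K'(2) by (auto simp: Phi_mult sinv_closed Phi_sinv)
    moreover have "mult (sinv S mult h) h \<in> K" using K'(4,5) h by blast
    ultimately have "Domain (Phi f) \<subseteq> {b}" using least by fastforce
    then have "a = b" using f by simp
    then show "k \<in> stab a" using b k K'(2) unfolding transporter_def by auto
  qed
qed

lemma faithful_closed_eq_stab:
  assumes K: "closed_inv_sub S mult K" and inj: "inj_on (phi S mult K) S"
  obtains a where "a \<in> Q" "K = stab a"
proof -
  obtain f where f: "f \<in> K" "Phi f = Id_on (Domain (Phi f))"
    and least: "\<And>k. k \<in> K \<Longrightarrow> Domain (Phi f) \<subseteq> Domain (Phi k)"
    using closed_least_domain[OF K] by blast
  have fS: "f \<in> S" using f closed_inv_subD(2)[OF K] by blast
  obtain a b where ab: "a \<in> Q" "b \<in> Q" "a \<noteq> b"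
    using card_Q exists_other by (metis card.empty ex_in_conv not_numeral_le_zero)
  let ?E1 = "rank_one a a" and ?E2 = "rank_one a b"
  have E: "?E1 \<in> S" "Phi ?E1 = {(a, a)}" "?E2 \<in> S" "Phi ?E2 = {(a, b)}"
    using rank_one ab by auto
  then have phi_E: "phi S mult K ?E1 \<noteq> phi S mult K ?E2"
    using inj ab(3) by (metis inj_onD prod.inject singleton_inject)
  consider "Domain (Phi f) = {}" | c where "Domain (Phi f) = {c}"
    | c d where "c \<in> Domain (Phi f)" "d \<in> Domain (Phi f)" "c \<noteq> d"
    by blast
  then show thesis
  proof cases
    case 1
    then have "Phi f = {}" using f(2) by simp
    then show ?thesis using phi_closed_trivial[OF K f(1)] E phi_E by simp
  next
    case (2 c)
    then have "Phi f = {(c, c)}" using f(2) by auto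
    moreover from this have "c \<in> Q" using Phi_subset[OF fS] by auto
    ultimately show ?thesis using closed_eq_stab[OF K f(1) _ least] that by blast
  next
    case 3
    moreover have "Phi f \<subseteq> Id" by (subst f(2)) auto
    ultimately show ?thesis
      using phi_closed_rank_one_empty[OF K f(1) _ least] E phi_E by metis
  qed
qed

theorem unique_faithful_transitive_rep:
  "\<exists>H. closed_inv_sub S mult H
     \<and> inj_on (phi S mult H) S
     \<and> card (cosets S mult H) = card Q
     \<and> (\<forall>s\<in>S. \<forall>t\<in>S. phi S mult H (mult s t) = phi S mult H s O phi S mult H t)
     \<and> (\<forall>K. closed_inv_sub S mult K \<and> inj_on (phi S mult K) S \<longrightarrow>
            card (cosets S mult K) = card Q \<and> rep_equiv S mult H K)"
proof -
  obtain a where a: "a \<in> Q" using card_Q by (metis card.empty ex_in_conv not_numeral_le_zero)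
  have "card (cosets S mult K) = card Q \<and> rep_equiv S mult (stab a) K"
    if "closed_inv_sub S mult K" "inj_on (phi S mult K) S" for K
    using faithful_closed_eq_stab[OF that] card_cosets_stab rep_equiv_stab[OF a] by metis
  then show ?thesis
    using a stab_closed inj_on_phi_stab card_cosets_stab phi_stab_mult by blast
qed

end

section \<open>Partitions of \<open>X \<union> X'\<close>\<close>

definition nonempty_subsets :: "nat \<Rightarrow> nat set set" where
  "nonempty_subsets n = {A. A \<noteq> {} \<and> A \<subseteq> {1..n}}"

lemma card_nonempty_subsets: "card (nonempty_subsets n) = 2 ^ n - 1"
proof -
  have "nonempty_subsets n = Pow {1..n} - {{}}" unfolding nonempty_subsets_def by auto
  then show ?thesis by (simp add: card_Pow)
qed

lemma two_le_card_nonempty_subsets: "2 \<le> n \<Longrightarrow> 2 \<le> card (nonempty_subsets n)"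
  using power_increasing[of 2 n "2::nat"] by (simp add: card_nonempty_subsets)

lemma mem_Xs [simp]: "(i, b) \<in> Xs n \<longleftrightarrow> 1 \<le> i \<and> i \<le> n \<and> \<not> b"
  unfolding Xs_def by auto

lemma mem_Xp [simp]: "(i, b) \<in> Xp n \<longleftrightarrow> 1 \<le> i \<and> i \<le> n \<and> b"
  unfolding Xp_def by auto

lemma mem_mkblk [simp]: "(i, b) \<in> mkblk A D \<longleftrightarrow> (if b then i \<in> D else i \<in> A)"
  unfolding mkblk_def by auto

lemma mem_topp [simp]: "i \<in> topp L \<longleftrightarrow> (i, False) \<in> L"
  unfolding topp_def by simp

lemma mem_botp [simp]: "i \<in> botp L \<longleftrightarrow> (i, True) \<in> L"
  unfolding botp_def by simp

lemma topp_mkblk [simp]: "topp (mkblk A D) = A"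
  unfolding topp_def by simp

lemma botp_mkblk [simp]: "botp (mkblk A D) = D"
  unfolding botp_def by simp

lemma mkblk_topp_botp [simp]: "mkblk (topp L) (botp L) = L"
proof (rule set_eqI)
  fix x :: pt show "x \<in> mkblk (topp L) (botp L) \<longleftrightarrow> x \<in> L"
    by (cases x; cases "snd x") auto
qed

lemma mkblk_eq_iff: "mkblk A D = mkblk A' D' \<longleftrightarrow> A = A' \<and> D = D'"
  by (metis topp_mkblk botp_mkblk)

lemma mkblk_subset_iff: "mkblk A D \<subseteq> Xs n \<union> Xp n \<longleftrightarrow> A \<subseteq> {1..n} \<and> D \<subseteq> {1..n}"
  unfolding mkblk_def by auto

lemma is_point_iff: "is_point L \<longleftrightarrow> (\<exists>x. L = {x})"
  unfolding is_point_def by (simp add: card_1_singleton_iff)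

lemma is_gline_iff: "is_gline n L \<longleftrightarrow> topp L \<inter> {1..n} \<noteq> {} \<and> botp L \<inter> {1..n} \<noteq> {}"
  unfolding is_gline_def by auto

lemma is_glineE:
  assumes "is_gline n L"
  obtains i j where "(i, False) \<in> L" "(j, True) \<in> L" "1 \<le> i" "i \<le> n" "1 \<le> j" "j \<le> n"
  using assms unfolding is_gline_iff by auto

lemma is_gline_not_point: "is_gline n L \<Longrightarrow> \<not> is_point L"
  unfolding is_gline_def is_point_iff Xs_def Xp_def by auto

lemma is_gline_mkblk: "A \<in> nonempty_subsets n \<Longrightarrow> D \<in> nonempty_subsets n \<Longrightarrow> is_gline n (mkblk A D)"
  unfolding is_gline_iff nonempty_subsets_def by auto

lemma PnD:
  assumes "\<alpha> \<in> Pn n"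
  shows "\<And>x. x \<in> Xs n \<union> Xp n \<Longrightarrow> \<exists>L\<in>\<alpha>. x \<in> L"
    and "\<And>L. L \<in> \<alpha> \<Longrightarrow> L \<subseteq> Xs n \<union> Xp n"
    and "\<And>L M x. L \<in> \<alpha> \<Longrightarrow> M \<in> \<alpha> \<Longrightarrow> x \<in> L \<Longrightarrow> x \<in> M \<Longrightarrow> L = M"
    and "\<And>L. L \<in> \<alpha> \<Longrightarrow> is_point L \<or> is_gline n L"
  using assms unfolding Pn_def partition_on_def disjoint_def by blast+

lemma PnI:
  assumes "\<Union>\<alpha> = Xs n \<union> Xp n"
    and "\<And>L M x. L \<in> \<alpha> \<Longrightarrow> M \<in> \<alpha> \<Longrightarrow> x \<in> L \<Longrightarrow> x \<in> M \<Longrightarrow> L = M"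
    and "\<And>L. L \<in> \<alpha> \<Longrightarrow> is_point L \<or> is_gline n L"
  shows "\<alpha> \<in> Pn n"
proof -
  have "{} \<notin> \<alpha>" using assms(3) unfolding is_point_def is_gline_def by fastforce
  then show ?thesis using assms unfolding Pn_def partition_on_def disjoint_def by blast
qed

lemma Pn_gline_iff_not_point: "\<alpha> \<in> Pn n \<Longrightarrow> L \<in> \<alpha> \<Longrightarrow> is_gline n L \<longleftrightarrow> \<not> is_point L"
  using PnD(4) is_gline_not_point by blast

lemma Pn_gline_subsets:
  assumes "\<alpha> \<in> Pn n" "L \<in> \<alpha>" "is_gline n L"
  shows "topp L \<in> nonempty_subsets n" "botp L \<in> nonempty_subsets n"
  using PnD(2)[OF assms(1,2)] assms(3) unfolding nonempty_subsets_def is_gline_iff by auto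

lemma Pn_gline_eqI:
  assumes "\<alpha> \<in> Pn n" "L \<in> \<alpha>" "M \<in> \<alpha>" "topp L \<inter> topp M \<noteq> {} \<or> botp L \<inter> botp M \<noteq> {}"
  shows "L = M"
proof -
  from assms(4) obtain x where "x \<in> L" "x \<in> M" by auto
  then show ?thesis by (rule PnD(3)[OF assms(1-3)])
qed

lemma Pn_subset_by_lines:
  assumes \<alpha>: "\<alpha> \<in> Pn n" and \<beta>: "\<beta> \<in> Pn n"
    and lines: "\<And>L. is_gline n L \<Longrightarrow> L \<in> \<alpha> \<longleftrightarrow> L \<in> \<beta>"
  shows "\<alpha> \<subseteq> \<beta>"
proof
  fix L assume L: "L \<in> \<alpha>"
  show "L \<in> \<beta>"
  proof (cases "is_gline n L")
    case False
    then have "is_point L" using PnD(4)[OF \<alpha> L] by blast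
    then obtain x where x: "L = {x}" unfolding is_point_iff by blast
    then have "x \<in> Xs n \<union> Xp n" using PnD(2)[OF \<alpha> L] by blast
    then obtain M where M: "M \<in> \<beta>" "x \<in> M" using PnD(1)[OF \<beta>] by blast
    show ?thesis
    proof (cases "is_gline n M")
      case True
      then have "M \<in> \<alpha>" using M(1) lines by blast
      then show ?thesis using PnD(3)[OF \<alpha> L _ _ M(2)] x M(1) by simp
    next
      case False
      then have "is_point M" using PnD(4)[OF \<beta> M(1)] by blast
      then obtain y where "M = {y}" unfolding is_point_iff by blast
      then show ?thesis using M x by simp
    qed
  qed (use lines L in blast)
qed

lemma Pn_eqI:
  assumes "\<alpha> \<in> Pn n" "\<beta> \<in> Pn n" "\<And>L. is_gline n L \<Longrightarrow> L \<in> \<alpha> \<longleftrightarrow> L \<in> \<beta>"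
  shows "\<alpha> = \<beta>"
  using Pn_subset_by_lines[OF assms] Pn_subset_by_lines[OF assms(2,1)] assms(3) by blast

definition flip :: "pt \<Rightarrow> pt" where
  "flip p = (fst p, \<not> snd p)"

definition transp_part :: "part \<Rightarrow> part" where
  "transp_part \<alpha> = (\<lambda>L. flip ` L) ` \<alpha>"

lemma flip_Pair [simp]: "flip (i, b) = (i, \<not> b)"
  unfolding flip_def by simp

lemma flip_flip [simp]: "flip (flip p) = p"
  unfolding flip_def by simp

lemma inj_flip: "inj flip"
  by (metis injI flip_flip)

lemma mem_flip_image: "x \<in> flip ` L \<longleftrightarrow> flip x \<in> L"
  by (metis flip_flip image_iff)

lemma flip_image: "flip ` L = mkblk (botp L) (topp L)"
proof (rule set_eqI)
  fix x :: pt show "x \<in> flip ` L \<longleftrightarrow> x \<in> mkblk (botp L) (topp L)"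
    by (cases x) (simp add: mem_flip_image)
qed

lemma flip_image_XsXp: "flip ` (Xs n \<union> Xp n) = Xs n \<union> Xp n"
  using flip_image[of "Xs n \<union> Xp n"] mkblk_topp_botp[of "Xs n \<union> Xp n"]
  by (auto simp: topp_def botp_def)

lemma is_point_flip_image: "is_point (flip ` L) \<longleftrightarrow> is_point L"
  unfolding is_point_def using inj_flip by (simp add: card_image inj_on_subset)

lemma is_gline_flip_image: "is_gline n (flip ` L) \<longleftrightarrow> is_gline n L"
  unfolding flip_image is_gline_iff by auto

lemma transp_part_Pn:
  assumes \<alpha>: "\<alpha> \<in> Pn n" shows "transp_part \<alpha> \<in> Pn n"
proof (rule PnI)
  have "\<Union>\<alpha> = Xs n \<union> Xp n" using PnD(1,2)[OF \<alpha>] by blast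
  then show "\<Union>(transp_part \<alpha>) = Xs n \<union> Xp n"
    unfolding transp_part_def image_Union[symmetric] by (simp add: flip_image_XsXp)
  show "L = M" if LM: "L \<in> transp_part \<alpha>" "M \<in> transp_part \<alpha>" "x \<in> L" "x \<in> M" for L M x
  proof -
    obtain L' M' where "L' \<in> \<alpha>" "M' \<in> \<alpha>" "L = flip ` L'" "M = flip ` M'"
      using LM(1,2) unfolding transp_part_def by blast
    with LM(3,4) PnD(3)[OF \<alpha>] show ?thesis by (metis mem_flip_image)
  qed
  show "is_point L \<or> is_gline n L" if "L \<in> transp_part \<alpha>" for L
    using that PnD(4)[OF \<alpha>] is_point_flip_image is_gline_flip_image
    unfolding transp_part_def by auto
qed

definition line_part :: "nat \<Rightarrow> nat set \<Rightarrow> nat set \<Rightarrow> part" where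
  "line_part n A D = insert (mkblk A D) {{x} | x. x \<in> Xs n \<union> Xp n \<and> x \<notin> mkblk A D}"

lemma line_part_Pn:
  assumes A: "A \<in> nonempty_subsets n" and D: "D \<in> nonempty_subsets n"
  shows "line_part n A D \<in> Pn n"
proof (rule PnI)
  have "mkblk A D \<subseteq> Xs n \<union> Xp n"
    using A D unfolding nonempty_subsets_def mkblk_subset_iff by blast
  then show "\<Union>(line_part n A D) = Xs n \<union> Xp n" unfolding line_part_def by blast
  show "L = M" if "L \<in> line_part n A D" "M \<in> line_part n A D" "x \<in> L" "x \<in> M" for L M x
    using that unfolding line_part_def by auto
  show "is_point L \<or> is_gline n L" if "L \<in> line_part n A D" for L
    using that is_gline_mkblk[OF A D] unfolding line_part_def is_point_iff by auto
qed

lemma line_part_gline: "L \<in> line_part n A D \<Longrightarrow> is_gline n L \<Longrightarrow> L = mkblk A D"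
  unfolding line_part_def using is_gline_not_point is_point_iff by blast

section \<open>The representation of PI*_n bar\<close>

definition line_map :: "nat \<Rightarrow> part \<Rightarrow> (nat set \<times> nat set) set" where
  "line_map n \<alpha> = {(topp L, botp L) | L. L \<in> \<alpha> \<and> is_gline n L}"

lemma line_map_subset: "\<alpha> \<in> Pn n \<Longrightarrow> line_map n \<alpha> \<subseteq> nonempty_subsets n \<times> nonempty_subsets n"
  unfolding line_map_def using Pn_gline_subsets by blast

lemma pbij_line_map:
  assumes \<alpha>: "\<alpha> \<in> Pn n" shows "pbij (line_map n \<alpha>)"
proof -
  have "L = M" if "L \<in> \<alpha>" "M \<in> \<alpha>" "is_gline n L" "topp L = topp M \<or> botp L = botp M" for L M
    using that Pn_gline_eqI[OF \<alpha>] unfolding is_gline_iff by blast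
  then show ?thesis unfolding pbij_def single_valued_def line_map_def by auto
qed

lemma inj_on_line_map: "inj_on (line_map n) (Pn n)"
proof (rule inj_onI)
  fix \<alpha> \<beta> assume \<alpha>\<beta>: "\<alpha> \<in> Pn n" "\<beta> \<in> Pn n" "line_map n \<alpha> = line_map n \<beta>"
  have "L \<in> \<alpha> \<longleftrightarrow> (topp L, botp L) \<in> line_map n \<alpha>" if "is_gline n L" "\<alpha> \<in> Pn n" for L \<alpha>
    using that unfolding line_map_def by (auto simp: prod_eq_iff) (metis mkblk_topp_botp)
  then show "\<alpha> = \<beta>" using \<alpha>\<beta> by (intro Pn_eqI) auto
qed

lemma line_map_transp_part: "line_map n (transp_part \<alpha>) = (line_map n \<alpha>)\<inverse>"
proof -
  have "line_map n (transp_part \<alpha>) =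
      {(topp (flip ` L), botp (flip ` L)) | L. L \<in> \<alpha> \<and> is_gline n (flip ` L)}"
    unfolding line_map_def transp_part_def by blast
  also have "\<dots> = {(botp L, topp L) | L. L \<in> \<alpha> \<and> is_gline n L}"
    by (simp only: is_gline_flip_image) (simp add: flip_image)
  finally show ?thesis unfolding line_map_def by auto
qed

lemma line_map_line_part:
  assumes "A \<in> nonempty_subsets n" "D \<in> nonempty_subsets n"
  shows "line_map n (line_part n A D) = {(A, D)}"
proof -
  have "line_map n (line_part n A D) = (\<lambda>L. (topp L, botp L)) ` {L \<in> line_part n A D. is_gline n L}"
    unfolding line_map_def by blast
  also have "{L \<in> line_part n A D. is_gline n L} = {mkblk A D}"
    using line_part_gline is_gline_mkblk[OF assms] unfolding line_part_def by blast
  finally show ?thesis by simp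
qed

lemma mem_lines_circ: "L \<in> lines_circ n \<alpha> \<beta> \<longleftrightarrow> (\<exists>La\<in>\<alpha>. \<exists>Lb\<in>\<beta>.
    is_gline n La \<and> is_gline n Lb \<and> botp La = topp Lb \<and> L = mkblk (topp La) (botp Lb))"
  unfolding lines_circ_def by blast

lemma lines_circ_gline:
  assumes "\<alpha> \<in> Pn n" "\<beta> \<in> Pn n" "L \<in> lines_circ n \<alpha> \<beta>"
  shows "is_gline n L" "L \<subseteq> Xs n \<union> Xp n"
  using assms Pn_gline_subsets is_gline_mkblk mkblk_subset_iff unfolding mem_lines_circ
  by (metis nonempty_subsets_def mem_Collect_eq)+

lemma lines_circ_disjoint:
  assumes \<alpha>: "\<alpha> \<in> Pn n" and \<beta>: "\<beta> \<in> Pn n"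
    and L: "L \<in> lines_circ n \<alpha> \<beta>" and M: "M \<in> lines_circ n \<alpha> \<beta>" and x: "x \<in> L" "x \<in> M"
  shows "L = M"
proof -
  obtain La Lb where l: "La \<in> \<alpha>" "Lb \<in> \<beta>" "is_gline n La" "is_gline n Lb" "botp La = topp Lb"
    "L = mkblk (topp La) (botp Lb)"
    using L unfolding mem_lines_circ by blast
  obtain Ma Mb where m: "Ma \<in> \<alpha>" "Mb \<in> \<beta>" "is_gline n Ma" "is_gline n Mb" "botp Ma = topp Mb"
    "M = mkblk (topp Ma) (botp Mb)"
    using M unfolding mem_lines_circ by blast
  have "La = Ma \<or> Lb = Mb"
  proof (cases "snd x")
    case True
    then have "fst x \<in> botp Lb \<inter> botp Mb" using x l(6) m(6) by (cases x) auto
    then show ?thesis using Pn_gline_eqI[OF \<beta> l(2) m(2)] by blast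
  next
    case False
    then have "fst x \<in> topp La \<inter> topp Ma" using x l(6) m(6) by (cases x) auto
    then show ?thesis using Pn_gline_eqI[OF \<alpha> l(1) m(1)] by blast
  qed
  moreover have "Lb = Mb" if "La = Ma"
  proof -
    have "topp Lb \<inter> topp Mb \<noteq> {}" using that l(4,5) m(5) unfolding is_gline_iff by auto
    then show ?thesis using Pn_gline_eqI[OF \<beta> l(2) m(2)] by blast
  qed
  moreover have "La = Ma" if "Lb = Mb"
  proof -
    have "botp La \<inter> botp Ma \<noteq> {}" using that l(3,5) m(5) unfolding is_gline_iff by auto
    then show ?thesis using Pn_gline_eqI[OF \<alpha> l(1) m(1)] by blast
  qed
  ultimately show ?thesis using l(6) m(6) by auto
qed

lemma PIbar_gline_iff:
  assumes "\<alpha> \<in> Pn n" "\<beta> \<in> Pn n"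
  shows "L \<in> PIbar n \<alpha> \<beta> \<and> is_gline n L \<longleftrightarrow> L \<in> lines_circ n \<alpha> \<beta>"
  using lines_circ_gline[OF assms] is_gline_not_point
  unfolding PIbar_def is_point_iff by blast

lemma PIbar_Pn:
  assumes \<alpha>: "\<alpha> \<in> Pn n" and \<beta>: "\<beta> \<in> Pn n"
  shows "PIbar n \<alpha> \<beta> \<in> Pn n"
proof (rule PnI)
  show "\<Union>(PIbar n \<alpha> \<beta>) = Xs n \<union> Xp n"
    using lines_circ_gline(2)[OF \<alpha> \<beta>] unfolding PIbar_def by blast
  show "L = M" if "L \<in> PIbar n \<alpha> \<beta>" "M \<in> PIbar n \<alpha> \<beta>" "x \<in> L" "x \<in> M" for L M x
    using that lines_circ_disjoint[OF \<alpha> \<beta>] unfolding PIbar_def by blast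
  show "is_point L \<or> is_gline n L" if "L \<in> PIbar n \<alpha> \<beta>" for L
    using that lines_circ_gline(1)[OF \<alpha> \<beta>] unfolding PIbar_def is_point_iff by blast
qed

lemma line_map_PIbar:
  assumes "\<alpha> \<in> Pn n" "\<beta> \<in> Pn n"
  shows "line_map n (PIbar n \<alpha> \<beta>) = line_map n \<alpha> O line_map n \<beta>"
proof -
  have "line_map n (PIbar n \<alpha> \<beta>) = {(topp L, botp L) | L. L \<in> lines_circ n \<alpha> \<beta>}"
    unfolding line_map_def using PIbar_gline_iff[OF assms] by blast
  also have "\<dots> = line_map n \<alpha> O line_map n \<beta>"
  proof (intro equalityI subsetI)
    fix p assume "p \<in> line_map n \<alpha> O line_map n \<beta>"
    then obtain La Lb where l: "La \<in> \<alpha>" "Lb \<in> \<beta>" "is_gline n La" "is_gline n Lb"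
      "botp La = topp Lb" "p = (topp La, botp Lb)"
      unfolding line_map_def by blast
    then have "mkblk (topp La) (botp Lb) \<in> lines_circ n \<alpha> \<beta>" unfolding mem_lines_circ by blast
    moreover have "p = (topp (mkblk (topp La) (botp Lb)), botp (mkblk (topp La) (botp Lb)))"
      using l(6) by simp
    ultimately show "p \<in> {(topp L, botp L) | L. L \<in> lines_circ n \<alpha> \<beta>}" by blast
  next
    fix p assume "p \<in> {(topp L, botp L) | L. L \<in> lines_circ n \<alpha> \<beta>}"
    then obtain La Lb where l: "La \<in> \<alpha>" "Lb \<in> \<beta>" "is_gline n La" "is_gline n Lb"
      "botp La = topp Lb" "p = (topp La, botp Lb)"
      unfolding mem_lines_circ by auto
    have "(topp La, botp La) \<in> line_map n \<alpha>" "(topp Lb, botp Lb) \<in> line_map n \<beta>"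
      unfolding line_map_def using l by blast+
    then show "p \<in> line_map n \<alpha> O line_map n \<beta>" using l(5,6) by auto
  qed
  finally show ?thesis .
qed

section \<open>The representation of PI*_n\<close>

definition union_of_lines :: "nat \<Rightarrow> part \<Rightarrow> pt set \<Rightarrow> bool" where
  "union_of_lines n \<gamma> S \<longleftrightarrow> S \<subseteq> Xs n \<union> Xp n \<and> (\<forall>L\<in>\<gamma>. L \<inter> S \<noteq> {} \<longrightarrow> L \<subseteq> S \<and> is_gline n L)"

definition union_map :: "nat \<Rightarrow> part \<Rightarrow> (nat set \<times> nat set) set" where
  "union_map n \<gamma> = {(A, D). A \<noteq> {} \<and> union_of_lines n \<gamma> (mkblk A D)}"

lemma union_of_linesD:
  "union_of_lines n \<gamma> S \<Longrightarrow> L \<in> \<gamma> \<Longrightarrow> x \<in> L \<Longrightarrow> x \<in> S \<Longrightarrow> L \<subseteq> S \<and> is_gline n L"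
  unfolding union_of_lines_def by blast

lemma union_of_lines_line:
  assumes "\<gamma> \<in> Pn n" "union_of_lines n \<gamma> S" "x \<in> S"
  obtains L where "L \<in> \<gamma>" "x \<in> L" "L \<subseteq> S" "is_gline n L"
proof -
  have "x \<in> Xs n \<union> Xp n" using assms(2,3) unfolding union_of_lines_def by blast
  then obtain L where "L \<in> \<gamma>" "x \<in> L" using PnD(1)[OF assms(1)] by blast
  with union_of_linesD[OF assms(2) _ _ assms(3)] that show thesis by blast
qed

lemma union_of_lines_transp_part:
  "union_of_lines n (transp_part \<gamma>) (flip ` S) \<longleftrightarrow> union_of_lines n \<gamma> S"
proof -
  have "flip ` S \<subseteq> Xs n \<union> Xp n \<longleftrightarrow> S \<subseteq> Xs n \<union> Xp n"
    by (metis flip_image_XsXp inj_flip inj_image_subset_iff)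
  moreover have "flip ` L \<inter> flip ` S = flip ` (L \<inter> S)" for L
    by (simp add: image_Int inj_flip)
  ultimately show ?thesis
    unfolding union_of_lines_def transp_part_def
    by (simp add: inj_image_subset_iff[OF inj_flip] is_gline_flip_image)
qed

lemma union_of_lines_mkblk_top:
  assumes \<gamma>: "\<gamma> \<in> Pn n" and A: "union_of_lines n \<gamma> (mkblk A D)" and A': "union_of_lines n \<gamma> (mkblk A D')"
  shows "D \<subseteq> D'"
proof
  fix j assume "j \<in> D"
  then obtain L where L: "L \<in> \<gamma>" "(j, True) \<in> L" "L \<subseteq> mkblk A D" "is_gline n L"
    using union_of_lines_line[OF \<gamma> A, of "(j, True)"] by auto
  then obtain i where "(i, False) \<in> L" unfolding is_gline_iff by auto
  moreover from this have "(i, False) \<in> mkblk A D'" using L(3) by auto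
  ultimately have "L \<subseteq> mkblk A D'" using union_of_linesD[OF A' L(1)] by blast
  then show "j \<in> D'" using L(2) by auto
qed

lemma union_of_lines_mkblk_nonempty:
  assumes \<gamma>: "\<gamma> \<in> Pn n" and A: "union_of_lines n \<gamma> (mkblk A D)" and "A \<noteq> {}"
  shows "D \<noteq> {}"
proof -
  obtain i where "(i, False) \<in> mkblk A D" using assms(3) by auto
  then obtain L where "L \<subseteq> mkblk A D" "is_gline n L" using union_of_lines_line[OF \<gamma> A] by metis
  then show ?thesis unfolding is_gline_iff by auto
qed

lemma union_of_lines_transp_part_mkblk:
  "union_of_lines n (transp_part \<gamma>) (mkblk A D) \<longleftrightarrow> union_of_lines n \<gamma> (mkblk D A)"
  using union_of_lines_transp_part[of n \<gamma> "mkblk D A"] by (simp add: flip_image)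

lemma union_of_lines_mkblk_empty_iff:
  assumes "\<gamma> \<in> Pn n" "union_of_lines n \<gamma> (mkblk A D)"
  shows "A = {} \<longleftrightarrow> D = {}"
  using assms union_of_lines_mkblk_nonempty[OF transp_part_Pn[OF assms(1)]]
    union_of_lines_mkblk_nonempty union_of_lines_transp_part_mkblk
  by metis

lemma union_map_transp_part:
  assumes "\<gamma> \<in> Pn n" shows "union_map n (transp_part \<gamma>) = (union_map n \<gamma>)\<inverse>"
  using union_of_lines_mkblk_empty_iff[OF assms]
  unfolding union_map_def union_of_lines_transp_part_mkblk by auto

lemma union_map_subset:
  assumes "\<gamma> \<in> Pn n" shows "union_map n \<gamma> \<subseteq> nonempty_subsets n \<times> nonempty_subsets n"
  using union_of_lines_mkblk_empty_iff[OF assms]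
  unfolding union_map_def union_of_lines_def mkblk_subset_iff nonempty_subsets_def by auto

lemma pbij_union_map:
  assumes \<gamma>: "\<gamma> \<in> Pn n" shows "pbij (union_map n \<gamma>)"
proof -
  have "D = D'" if "union_of_lines n \<gamma> (mkblk A D)" "union_of_lines n \<gamma> (mkblk A D')" for A D D'
    using that union_of_lines_mkblk_top[OF \<gamma>] by blast
  moreover have "A = A'" if "union_of_lines n \<gamma> (mkblk A D)" "union_of_lines n \<gamma> (mkblk A' D)" for A A' D
  proof -
    have "union_of_lines n (transp_part \<gamma>) (mkblk D A)" "union_of_lines n (transp_part \<gamma>) (mkblk D A')"
      using that by (simp_all add: union_of_lines_transp_part_mkblk)
    then show ?thesis using union_of_lines_mkblk_top[OF transp_part_Pn[OF \<gamma>]] by blast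
  qed
  ultimately show ?thesis unfolding pbij_def single_valued_def union_map_def by fast
qed

lemma gline_in_union_map:
  assumes \<gamma>: "\<gamma> \<in> Pn n" and L: "L \<in> \<gamma>" "is_gline n L"
  shows "(topp L, botp L) \<in> union_map n \<gamma>"
proof -
  have "union_of_lines n \<gamma> L" unfolding union_of_lines_def using PnD(2,3)[OF \<gamma>] L by blast
  then show ?thesis using L(2) unfolding union_map_def is_gline_iff by auto
qed

lemma inj_on_union_map: "inj_on (union_map n) (Pn n)"
proof (rule inj_onI)
  fix \<alpha> \<beta> assume \<alpha>\<beta>: "\<alpha> \<in> Pn n" "\<beta> \<in> Pn n" "union_map n \<alpha> = union_map n \<beta>"
  have mem: "L \<in> \<beta>" if \<alpha>: "\<alpha> \<in> Pn n" and \<beta>: "\<beta> \<in> Pn n" and eq: "union_map n \<alpha> = union_map n \<beta>"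
    and L: "L \<in> \<alpha>" "is_gline n L" for \<alpha> \<beta> L
  proof -
    have "(topp L, botp L) \<in> union_map n \<beta>" using gline_in_union_map[OF \<alpha> L] eq by simp
    then have "union_of_lines n \<beta> L" unfolding union_map_def by simp
    moreover obtain x where x: "x \<in> L" using L(2) unfolding is_gline_def by blast
    ultimately obtain M where M: "M \<in> \<beta>" "x \<in> M" "M \<subseteq> L" "is_gline n M"
      using union_of_lines_line[OF \<beta>] by metis
    have "(topp M, botp M) \<in> union_map n \<alpha>" using gline_in_union_map[OF \<beta> M(1,4)] eq by simp
    then have "union_of_lines n \<alpha> M" unfolding union_map_def by simp
    then have "L \<subseteq> M" using union_of_linesD[OF _ L(1) x M(2)] by blast
    then show ?thesis using M by auto
  qed
  show "\<alpha> = \<beta>"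
    using mem[OF \<alpha>\<beta>] mem[OF \<alpha>\<beta>(2,1) \<alpha>\<beta>(3)[symmetric]] by (intro Pn_eqI[OF \<alpha>\<beta>(1,2)]) blast
qed

lemma union_map_line_part:
  assumes A: "A \<in> nonempty_subsets n" and D: "D \<in> nonempty_subsets n"
  shows "union_map n (line_part n A D) = {(A, D)}"
proof (intro equalityI subsetI)
  have P: "line_part n A D \<in> Pn n" using line_part_Pn[OF A D] .
  fix p assume "p \<in> union_map n (line_part n A D)"
  then obtain C E where p: "p = (C, E)" "C \<noteq> {}" "union_of_lines n (line_part n A D) (mkblk C E)"
    unfolding union_map_def by blast
  have line: "mkblk A D \<subseteq> mkblk C E \<and> x \<in> mkblk A D" if x: "x \<in> mkblk C E" for x
  proof -
    obtain L where "L \<in> line_part n A D" "x \<in> L" "L \<subseteq> mkblk C E" "is_gline n L"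
      by (rule union_of_lines_line[OF P p(3) x])
    then show ?thesis using line_part_gline by blast
  qed
  obtain c where "(c, False) \<in> mkblk C E" using p(2) by auto
  then have "mkblk C E = mkblk A D" using line by blast
  then show "p \<in> {(A, D)}" using p(1) by (simp add: mkblk_eq_iff)
next
  fix p assume "p \<in> {(A, D)}"
  moreover have "mkblk A D \<in> line_part n A D" unfolding line_part_def by simp
  ultimately show "p \<in> union_map n (line_part n A D)"
    using gline_in_union_map[OF line_part_Pn[OF A D] _ is_gline_mkblk[OF A D]] by simp
qed
definition upper :: "pt \<Rightarrow> nat \<times> nat" where
  "upper p = (fst p, if snd p then 1 else 0)"

definition lower :: "pt \<Rightarrow> nat \<times> nat" where
  "lower p = (fst p, if snd p then 2 else 1)"

lemma upper_Pair [simp]: "upper (i, b) = (i, if b then 1 else 0)"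
  unfolding upper_def by simp

lemma lower_Pair [simp]: "lower (i, b) = (i, if b then 2 else 1)"
  unfolding lower_def by simp

lemma inj_upper: "inj upper"
  unfolding inj_def upper_def by (auto split: if_splits simp: prod_eq_iff)

lemma inj_lower: "inj lower"
  unfolding inj_def lower_def by (auto split: if_splits simp: prod_eq_iff)

lemma embL_eq: "embL \<alpha> = (\<lambda>L. upper ` L) ` \<alpha>"
  unfolding embL_def upper_def by (simp add: case_prod_beta)

lemma embR_eq: "embR \<beta> = (\<lambda>L. lower ` L) ` \<beta>"
  unfolding embR_def lower_def by (simp add: case_prod_beta)

lemma simrel_refl: "(u, u) \<in> simrel \<alpha> \<beta>"
  unfolding simrel_def by simp

lemma simrel_sym: "(u, v) \<in> simrel \<alpha> \<beta> \<Longrightarrow> (v, u) \<in> simrel \<alpha> \<beta>"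
  unfolding simrel_def by (rule symD[OF sym_rtrancl]) (auto simp: sym_def)

lemma simrel_trans: "(u, v) \<in> simrel \<alpha> \<beta> \<Longrightarrow> (v, w) \<in> simrel \<alpha> \<beta> \<Longrightarrow> (u, w) \<in> simrel \<alpha> \<beta>"
  unfolding simrel_def by (rule rtrancl_trans)

lemma simrel_block:
  "B \<in> embL \<alpha> \<union> embR \<beta> \<Longrightarrow> u \<in> B \<Longrightarrow> v \<in> B \<Longrightarrow> (u, v) \<in> simrel \<alpha> \<beta>"
  unfolding simrel_def by blast

lemma simrel_cases:
  assumes "(u, v) \<in> simrel \<alpha> \<beta>"
  obtains "v = u" | B where "B \<in> embL \<alpha> \<union> embR \<beta>" "v \<in> B"
  using assms[unfolded simrel_def]
proof (cases rule: rtranclE)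
  case (step y)
  then show thesis using that(2) by blast
qed (use that(1) in simp)

lemma emb_block_range:
  assumes "\<alpha> \<in> Pn n" "\<beta> \<in> Pn n" "Bk \<in> embL \<alpha> \<union> embR \<beta>" "w \<in> Bk"
  shows "1 \<le> fst w \<and> fst w \<le> n \<and> snd w \<le> 2"
proof -
  have range: "1 \<le> fst p \<and> fst p \<le> n" if "p \<in> Xs n \<union> Xp n" for p
    using that by (cases p) auto
  from assms(3,4) obtain p where "p \<in> Xs n \<union> Xp n" "w = upper p \<or> w = lower p"
    using PnD(2)[OF assms(1)] PnD(2)[OF assms(2)] unfolding embL_eq embR_eq by blast
  then show ?thesis using range[of p] by (auto simp: upper_def lower_def)
qed

lemma simrel_range:
  assumes "\<alpha> \<in> Pn n" "\<beta> \<in> Pn n" "(u, w) \<in> simrel \<alpha> \<beta>" "u \<noteq> w"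
  shows "1 \<le> fst w \<and> fst w \<le> n \<and> snd w \<le> 2"
  using assms(3,4) emb_block_range[OF assms(1,2)] by (metis simrel_cases)

lemma good_simrel: "(u, v) \<in> simrel \<alpha> \<beta> \<Longrightarrow> good \<alpha> \<beta> u \<longleftrightarrow> good \<alpha> \<beta> v"
  unfolding good_def by (meson simrel_sym simrel_trans)

lemma good_block:
  assumes "good \<alpha> \<beta> u" "(u, w) \<in> simrel \<alpha> \<beta>" "B \<in> embL \<alpha> \<union> embR \<beta>" "w \<in> B"
  shows "\<not> is_point B" "\<And>w'. w' \<in> B \<Longrightarrow> (u, w') \<in> simrel \<alpha> \<beta>"
  using assms simrel_trans[OF assms(2) simrel_block[OF assms(3,4)]] unfolding good_def by blast+

lemma good_upper_line:
  assumes \<alpha>: "\<alpha> \<in> Pn n" and u: "good \<alpha> \<beta> u" "(u, upper p) \<in> simrel \<alpha> \<beta>"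
    and L: "L \<in> \<alpha>" "p \<in> L"
  shows "is_gline n L" "\<And>q. q \<in> L \<Longrightarrow> (u, upper q) \<in> simrel \<alpha> \<beta>"
proof -
  have B: "upper ` L \<in> embL \<alpha> \<union> embR \<beta>" using L unfolding embL_eq by blast
  have "\<not> is_point (upper ` L)" using good_block(1)[OF u B] L(2) by blast
  then show "is_gline n L"
    using Pn_gline_iff_not_point[OF \<alpha> L(1)] inj_upper by (simp add: is_point_def card_image inj_on_subset)
  show "(u, upper q) \<in> simrel \<alpha> \<beta>" if "q \<in> L" for q
    using good_block(2)[OF u B] L(2) that by blast
qed

lemma good_lower_line:
  assumes \<beta>: "\<beta> \<in> Pn n" and u: "good \<alpha> \<beta> u" "(u, lower p) \<in> simrel \<alpha> \<beta>"
    and L: "L \<in> \<beta>" "p \<in> L"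
  shows "is_gline n L" "\<And>q. q \<in> L \<Longrightarrow> (u, lower q) \<in> simrel \<alpha> \<beta>"
proof -
  have B: "lower ` L \<in> embL \<alpha> \<union> embR \<beta>" using L unfolding embR_eq by blast
  have "\<not> is_point (lower ` L)" using good_block(1)[OF u B] L(2) by blast
  then show "is_gline n L"
    using Pn_gline_iff_not_point[OF \<beta> L(1)] inj_lower by (simp add: is_point_def card_image inj_on_subset)
  show "(u, lower q) \<in> simrel \<alpha> \<beta>" if "q \<in> L" for q
    using good_block(2)[OF u B] L(2) that by blast
qed

lemma mem_outset: "(i, k) \<in> outset n \<longleftrightarrow> 1 \<le> i \<and> i \<le> n \<and> (k = 0 \<or> k = 2)"
  unfolding outset_def by auto

lemma outpt_Pair [simp]: "outpt (i, k) = (i, k = 2)"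
  unfolding outpt_def by simp

lemma inj_on_outpt: "inj_on outpt (outset n)"
  unfolding inj_on_def outset_def by auto

lemma outpt_outset: "outpt ` outset n = Xs n \<union> Xp n"
proof (intro equalityI subsetI)
  fix p assume "p \<in> Xs n \<union> Xp n"
  then have "(fst p, if snd p then 2 else 0) \<in> outset n" "p = outpt (fst p, if snd p then 2 else 0)"
    by (cases p; auto simp: mem_outset)+
  then show "p \<in> outpt ` outset n" by blast
qed (auto simp: outset_def)

definition star_class :: "nat \<Rightarrow> part \<Rightarrow> part \<Rightarrow> nat \<times> nat \<Rightarrow> (nat \<times> nat) set" where
  "star_class n \<alpha> \<beta> u = {v \<in> outset n. v = u \<or> ((u, v) \<in> simrel \<alpha> \<beta> \<and> good \<alpha> \<beta> u)}"

lemma PIstar_eq: "PIstar n \<alpha> \<beta> = (\<lambda>u. outpt ` star_class n \<alpha> \<beta> u) ` outset n"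
  unfolding PIstar_def star_class_def ..

lemma star_class_good:
  "good \<alpha> \<beta> u \<Longrightarrow> u \<in> outset n \<Longrightarrow> star_class n \<alpha> \<beta> u = {v \<in> outset n. (u, v) \<in> simrel \<alpha> \<beta>}"
  unfolding star_class_def using simrel_refl by blast

lemma star_class_not_good: "\<not> good \<alpha> \<beta> u \<Longrightarrow> u \<in> outset n \<Longrightarrow> star_class n \<alpha> \<beta> u = {u}"
  unfolding star_class_def by blast

lemma star_class_eq:
  assumes u: "u \<in> outset n" and v: "v \<in> star_class n \<alpha> \<beta> u"
  shows "star_class n \<alpha> \<beta> v = star_class n \<alpha> \<beta> u"
proof (cases "v = u")
  case False
  then have uv: "(u, v) \<in> simrel \<alpha> \<beta>" "good \<alpha> \<beta> u" "v \<in> outset n"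
    using v unfolding star_class_def by auto
  then have "good \<alpha> \<beta> v" using good_simrel by blast
  moreover have "(v, w) \<in> simrel \<alpha> \<beta> \<longleftrightarrow> (u, w) \<in> simrel \<alpha> \<beta>" for w
    using uv(1) simrel_sym simrel_trans by metis
  ultimately show ?thesis using star_class_good u uv by simp
qed simp

lemma good_simrel_middle:
  assumes \<alpha>: "\<alpha> \<in> Pn n" and \<beta>: "\<beta> \<in> Pn n" and u: "u \<in> outset n" "good \<alpha> \<beta> u"
  obtains j where "1 \<le> j" "j \<le> n" "(u, (j, 1)) \<in> simrel \<alpha> \<beta>"
proof -
  obtain i k where ik: "u = (i, k)" "1 \<le> i" "i \<le> n" "k = 0 \<or> k = 2"
    using u(1) by (cases u) (auto simp: mem_outset)
  show thesis
  proof (cases "k = 0")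
    case True
    then have "u = upper (i, False)" "(i, False) \<in> Xs n \<union> Xp n" using ik by auto
    moreover obtain L where "L \<in> \<alpha>" "(i, False) \<in> L" using PnD(1)[OF \<alpha>] calculation(2) by blast
    ultimately have "is_gline n L" "\<And>q. q \<in> L \<Longrightarrow> (u, upper q) \<in> simrel \<alpha> \<beta>"
      using good_upper_line[OF \<alpha> u(2)] simrel_refl by metis+
    then show thesis using that by (elim is_glineE) force
  next
    case False
    then have "u = lower (i, True)" "(i, True) \<in> Xs n \<union> Xp n" using ik by auto
    moreover obtain M where "M \<in> \<beta>" "(i, True) \<in> M" using PnD(1)[OF \<beta>] calculation(2) by blast
    ultimately have "is_gline n M" "\<And>q. q \<in> M \<Longrightarrow> (u, lower q) \<in> simrel \<alpha> \<beta>"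
      using good_lower_line[OF \<beta> u(2)] simrel_refl by metis+
    then show thesis using that by (elim is_glineE) force
  qed
qed

lemma good_simrel_outer:
  assumes \<alpha>: "\<alpha> \<in> Pn n" and \<beta>: "\<beta> \<in> Pn n" and u: "good \<alpha> \<beta> u"
    and j: "1 \<le> j" "j \<le> n" "(u, (j, 1)) \<in> simrel \<alpha> \<beta>"
  obtains i m where "(u, (i, 0)) \<in> simrel \<alpha> \<beta>" "(u, (m, 2)) \<in> simrel \<alpha> \<beta>"
    "1 \<le> i" "i \<le> n" "1 \<le> m" "m \<le> n"
proof -
  have "(j, True) \<in> Xs n \<union> Xp n" "(j, False) \<in> Xs n \<union> Xp n" using j by auto
  then obtain L M where L: "L \<in> \<alpha>" "(j, True) \<in> L" and M: "M \<in> \<beta>" "(j, False) \<in> M"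
    using PnD(1)[OF \<alpha>] PnD(1)[OF \<beta>] by meson
  have "is_gline n L" "\<And>q. q \<in> L \<Longrightarrow> (u, upper q) \<in> simrel \<alpha> \<beta>"
    using good_upper_line[OF \<alpha> u _ L] j(3) by simp_all
  moreover obtain i where "(i, False) \<in> L" "1 \<le> i" "i \<le> n"
    using calculation(1) unfolding is_gline_iff by auto
  moreover have "is_gline n M" "\<And>q. q \<in> M \<Longrightarrow> (u, lower q) \<in> simrel \<alpha> \<beta>"
    using good_lower_line[OF \<beta> u _ M] j(3) by simp_all
  moreover obtain m where "(m, True) \<in> M" "1 \<le> m" "m \<le> n"
    using calculation(6) unfolding is_gline_iff by auto
  ultimately show thesis using that[of i m] by force
qed

lemma good_star_class_gline:
  assumes \<alpha>: "\<alpha> \<in> Pn n" and \<beta>: "\<beta> \<in> Pn n" and u: "u \<in> outset n" "good \<alpha> \<beta> u"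
  shows "is_gline n (outpt ` star_class n \<alpha> \<beta> u)"
proof -
  obtain j where "1 \<le> j" "j \<le> n" "(u, (j, 1)) \<in> simrel \<alpha> \<beta>"
    using good_simrel_middle[OF assms] .
  then obtain i m where "(u, (i, 0)) \<in> simrel \<alpha> \<beta>" "(u, (m, 2)) \<in> simrel \<alpha> \<beta>"
    "1 \<le> i" "i \<le> n" "1 \<le> m" "m \<le> n"
    using good_simrel_outer[OF \<alpha> \<beta> u(2)] by metis
  then have "(i, 0) \<in> star_class n \<alpha> \<beta> u" "(m, 2) \<in> star_class n \<alpha> \<beta> u"
    using star_class_good[OF u(2,1)] by (auto simp: mem_outset)
  then have "(i, False) \<in> outpt ` star_class n \<alpha> \<beta> u" "(m, True) \<in> outpt ` star_class n \<alpha> \<beta> u"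
    using image_eqI[of "(i, False)" outpt "(i, 0)"] image_eqI[of "(m, True)" outpt "(m, 2)"]
    by simp_all
  with \<open>1 \<le> i\<close> \<open>i \<le> n\<close> \<open>1 \<le> m\<close> \<open>m \<le> n\<close> show ?thesis unfolding is_gline_def by auto
qed

lemma PIstar_Pn:
  assumes \<alpha>: "\<alpha> \<in> Pn n" and \<beta>: "\<beta> \<in> Pn n" shows "PIstar n \<alpha> \<beta> \<in> Pn n"
proof (rule PnI)
  have "u \<in> star_class n \<alpha> \<beta> u" "star_class n \<alpha> \<beta> u \<subseteq> outset n" if "u \<in> outset n" for u
    using that unfolding star_class_def by auto
  then show "\<Union>(PIstar n \<alpha> \<beta>) = Xs n \<union> Xp n"
    unfolding PIstar_eq outpt_outset[symmetric] by blast
  show "L = M" if LM: "L \<in> PIstar n \<alpha> \<beta>" "M \<in> PIstar n \<alpha> \<beta>" "x \<in> L" "x \<in> M" for L M x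
  proof -
    obtain u v w w' where "u \<in> outset n" "v \<in> outset n" "L = outpt ` star_class n \<alpha> \<beta> u"
      "M = outpt ` star_class n \<alpha> \<beta> v" "w \<in> star_class n \<alpha> \<beta> u" "w' \<in> star_class n \<alpha> \<beta> v"
      "x = outpt w" "x = outpt w'"
      using LM unfolding PIstar_eq by blast
    moreover from this have "w = w'"
      using inj_on_outpt[THEN inj_onD] unfolding star_class_def by blast
    ultimately show ?thesis using star_class_eq by metis
  qed
  show "is_point L \<or> is_gline n L" if L: "L \<in> PIstar n \<alpha> \<beta>" for L
  proof -
    obtain u where u: "u \<in> outset n" "L = outpt ` star_class n \<alpha> \<beta> u"
      using L unfolding PIstar_eq by blast
    then show ?thesis
      using good_star_class_gline[OF \<alpha> \<beta> u(1)] star_class_not_good[OF _ u(1)]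
      by (cases "good \<alpha> \<beta> u") (auto simp: is_point_iff)
  qed
qed

definition layers :: "nat set \<Rightarrow> nat set \<Rightarrow> nat set \<Rightarrow> (nat \<times> nat) set" where
  "layers A B D = A \<times> {0} \<union> B \<times> {1} \<union> D \<times> {2}"

lemma mem_layers: "(i, k) \<in> layers A B D \<longleftrightarrow> (k = 0 \<and> i \<in> A) \<or> (k = 1 \<and> i \<in> B) \<or> (k = 2 \<and> i \<in> D)"
  unfolding layers_def by auto

lemma upper_mem_layers: "upper p \<in> layers A B D \<longleftrightarrow> p \<in> mkblk A B"
  by (cases p) (auto simp: mem_layers)

lemma lower_mem_layers: "lower p \<in> layers A B D \<longleftrightarrow> p \<in> mkblk B D"
  by (cases p) (auto simp: mem_layers)

lemma outpt_mem_mkblk: "v \<in> outset n \<Longrightarrow> outpt v \<in> mkblk A D \<longleftrightarrow> v \<in> layers A B D"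
  by (cases v) (auto simp: mem_outset mem_layers)

definition block_closed :: "part \<Rightarrow> part \<Rightarrow> (nat \<times> nat) set \<Rightarrow> bool" where
  "block_closed \<alpha> \<beta> T \<longleftrightarrow> (\<forall>B \<in> embL \<alpha> \<union> embR \<beta>. B \<inter> T \<noteq> {} \<longrightarrow> B \<subseteq> T \<and> \<not> is_point B)"

lemma block_closed_simrel:
  assumes T: "block_closed \<alpha> \<beta> T" and uv: "(u, v) \<in> simrel \<alpha> \<beta>" and u: "u \<in> T"
  shows "v \<in> T"
  using uv[unfolded simrel_def] u
proof (induction rule: rtrancl_induct)
  case (step y z)
  then show ?case using T unfolding block_closed_def by blast
qed

lemma block_closed_good:
  assumes T: "block_closed \<alpha> \<beta> T" and u: "u \<in> T" shows "good \<alpha> \<beta> u"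
  unfolding good_def
proof (intro ballI impI notI)
  fix B w assume "B \<in> embL \<alpha> \<union> embR \<beta>" "is_point B" "w \<in> B" "(u, w) \<in> simrel \<alpha> \<beta>"
  moreover from this have "w \<in> T" using block_closed_simrel[OF T _ u] by blast
  ultimately show False using T unfolding block_closed_def by blast
qed

lemma image_blocks_closed_iff:
  assumes \<gamma>: "\<gamma> \<in> Pn n" and f: "inj f" "\<And>p. f p \<in> T \<longleftrightarrow> p \<in> S" and S: "S \<subseteq> Xs n \<union> Xp n"
  shows "(\<forall>B \<in> (\<lambda>L. f ` L) ` \<gamma>. B \<inter> T \<noteq> {} \<longrightarrow> B \<subseteq> T \<and> \<not> is_point B) \<longleftrightarrow> union_of_lines n \<gamma> S"
proof -
  have "f ` L \<inter> T \<noteq> {} \<longleftrightarrow> L \<inter> S \<noteq> {}" "f ` L \<subseteq> T \<longleftrightarrow> L \<subseteq> S" for L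
    using f(2) by blast+
  moreover have "is_point (f ` L) \<longleftrightarrow> is_point L" for L
    using f(1) by (simp add: is_point_def card_image inj_on_subset)
  ultimately show ?thesis
    unfolding union_of_lines_def using S Pn_gline_iff_not_point[OF \<gamma>] by auto
qed

lemma block_closed_layers_iff:
  assumes \<alpha>: "\<alpha> \<in> Pn n" and \<beta>: "\<beta> \<in> Pn n" and ABD: "A \<subseteq> {1..n}" "B \<subseteq> {1..n}" "D \<subseteq> {1..n}"
  shows "block_closed \<alpha> \<beta> (layers A B D) \<longleftrightarrow>
    union_of_lines n \<alpha> (mkblk A B) \<and> union_of_lines n \<beta> (mkblk B D)"
  unfolding block_closed_def embL_eq embR_eq ball_Un
  using image_blocks_closed_iff[OF \<alpha> inj_upper upper_mem_layers]
    image_blocks_closed_iff[OF \<beta> inj_lower lower_mem_layers] ABD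
  by (simp add: mkblk_subset_iff)

lemma union_of_lines_PIstar:
  assumes \<alpha>: "\<alpha> \<in> Pn n" and \<beta>: "\<beta> \<in> Pn n" and AD: "mkblk A D \<subseteq> Xs n \<union> Xp n"
    and T: "block_closed \<alpha> \<beta> (layers A B D)"
  shows "union_of_lines n (PIstar n \<alpha> \<beta>) (mkblk A D)"
  unfolding union_of_lines_def
proof (intro conjI AD ballI impI)
  fix L assume "L \<in> PIstar n \<alpha> \<beta>" "L \<inter> mkblk A D \<noteq> {}"
  then obtain u v where u: "u \<in> outset n" "L = outpt ` star_class n \<alpha> \<beta> u"
    and v: "v \<in> star_class n \<alpha> \<beta> u" "outpt v \<in> mkblk A D"
    unfolding PIstar_eq by blast
  have "v \<in> layers A B D" using v outpt_mem_mkblk unfolding star_class_def by blast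
  moreover have "v = u \<or> (v, u) \<in> simrel \<alpha> \<beta>" using v(1) simrel_sym unfolding star_class_def by blast
  ultimately have uT: "u \<in> layers A B D" using block_closed_simrel[OF T] by blast
  have good: "good \<alpha> \<beta> u" using block_closed_good[OF T uT] .
  have "star_class n \<alpha> \<beta> u \<subseteq> layers A B D"
    using star_class_good[OF good u(1)] block_closed_simrel[OF T _ uT] by blast
  then show "L \<subseteq> mkblk A D"
    using u(2) outpt_mem_mkblk star_class_good[OF good u(1)] by blast
  show "is_gline n L" using good_star_class_gline[OF \<alpha> \<beta> u(1) good] u(2) by simp
qed

lemma block_closed_simrel_image:
  assumes "\<And>u. u \<in> U \<Longrightarrow> good \<alpha> \<beta> u"
  shows "block_closed \<alpha> \<beta> (simrel \<alpha> \<beta> `` U)"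
  unfolding block_closed_def
proof (intro ballI impI)
  fix B assume B: "B \<in> embL \<alpha> \<union> embR \<beta>" "B \<inter> simrel \<alpha> \<beta> `` U \<noteq> {}"
  then obtain u w where "u \<in> U" "(u, w) \<in> simrel \<alpha> \<beta>" "w \<in> B" by blast
  then show "B \<subseteq> simrel \<alpha> \<beta> `` U \<and> \<not> is_point B" using good_block[OF _ _ B(1)] assms by blast
qed

lemma union_of_lines_PIstar_outer:
  assumes \<alpha>: "\<alpha> \<in> Pn n" and \<beta>: "\<beta> \<in> Pn n" and AD: "union_of_lines n (PIstar n \<alpha> \<beta>) (mkblk A D)"
    and u: "u \<in> layers A {} D"
  shows "u \<in> outset n" "good \<alpha> \<beta> u" "star_class n \<alpha> \<beta> u \<subseteq> layers A {} D"
proof -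
  show u_outset: "u \<in> outset n"
    using u AD unfolding union_of_lines_def mkblk_subset_iff by (cases u) (auto simp: mem_layers mem_outset)
  let ?L = "outpt ` star_class n \<alpha> \<beta> u"
  have "?L \<in> PIstar n \<alpha> \<beta>" using u_outset unfolding PIstar_eq by blast
  moreover have "outpt u \<in> ?L \<inter> mkblk A D"
    using u_outset outpt_mem_mkblk u unfolding star_class_def by blast
  ultimately have L: "?L \<subseteq> mkblk A D" "is_gline n ?L" using union_of_linesD[OF AD] by blast+
  show "good \<alpha> \<beta> u"
    using L(2) star_class_not_good[OF _ u_outset] is_gline_not_point is_point_iff by fastforce
  show "star_class n \<alpha> \<beta> u \<subseteq> layers A {} D"
    using L(1) outpt_mem_mkblk unfolding star_class_def by blast
qed

text \<open>The middle layer \<open>B\<close> is read off from the \<open>\<sim>\<close>-classes of the points of \<open>A \<union> D'\<close>.\<close>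

lemma union_of_lines_PIstarD:
  assumes \<alpha>: "\<alpha> \<in> Pn n" and \<beta>: "\<beta> \<in> Pn n" and AD: "union_of_lines n (PIstar n \<alpha> \<beta>) (mkblk A D)"
  obtains B where "B \<subseteq> {1..n}" "block_closed \<alpha> \<beta> (layers A B D)"
proof -
  note outer = union_of_lines_PIstar_outer[OF \<alpha> \<beta> AD]
  define T where "T = simrel \<alpha> \<beta> `` layers A {} D"
  define B where "B = {j. (j, 1) \<in> T}"
  have "T \<subseteq> layers A B D"
  proof
    fix w assume "w \<in> T"
    then obtain u where u: "u \<in> layers A {} D" "(u, w) \<in> simrel \<alpha> \<beta>" unfolding T_def by blast
    show "w \<in> layers A B D"
    proof (cases "snd w = 1 \<or> w = u")
      case True
      then show ?thesis using u \<open>w \<in> T\<close> unfolding B_def by (cases w) (auto simp: mem_layers)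
    next
      case False
      then have "w \<in> outset n" using simrel_range[OF \<alpha> \<beta> u(2)] by (cases w) (auto simp: mem_outset)
      then have "w \<in> star_class n \<alpha> \<beta> u" using outer(2)[OF u(1)] u(2) unfolding star_class_def by blast
      then show ?thesis using outer(3)[OF u(1)] by (auto simp: layers_def)
    qed
  qed
  moreover have "layers A B D \<subseteq> T"
    using simrel_refl unfolding T_def B_def layers_def by blast
  ultimately have T_eq: "T = layers A B D" by blast
  have "B \<subseteq> {1..n}"
  proof
    fix j assume "j \<in> B"
    then obtain u where "u \<in> layers A {} D" "(u, (j, 1)) \<in> simrel \<alpha> \<beta>" unfolding B_def T_def by blast
    moreover from this have "u \<noteq> (j, 1)" by (auto simp: layers_def)
    ultimately show "j \<in> {1..n}" using simrel_range[OF \<alpha> \<beta>] by fastforce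
  qed
  moreover have "block_closed \<alpha> \<beta> T"
    unfolding T_def using outer(2) by (rule block_closed_simrel_image)
  ultimately show thesis using that T_eq by simp
qed

lemma union_map_PIstar:
  assumes \<alpha>: "\<alpha> \<in> Pn n" and \<beta>: "\<beta> \<in> Pn n"
  shows "union_map n (PIstar n \<alpha> \<beta>) = union_map n \<alpha> O union_map n \<beta>"
proof (intro equalityI subsetI)
  fix p assume "p \<in> union_map n (PIstar n \<alpha> \<beta>)"
  then obtain A D where p: "p = (A, D)" "A \<noteq> {}" and AD: "union_of_lines n (PIstar n \<alpha> \<beta>) (mkblk A D)"
    unfolding union_map_def by blast
  obtain B where B: "B \<subseteq> {1..n}" "block_closed \<alpha> \<beta> (layers A B D)"
    using union_of_lines_PIstarD[OF \<alpha> \<beta> AD] .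
  have "A \<subseteq> {1..n}" "D \<subseteq> {1..n}" using AD unfolding union_of_lines_def mkblk_subset_iff by blast+
  then have "union_of_lines n \<alpha> (mkblk A B)" "union_of_lines n \<beta> (mkblk B D)"
    using block_closed_layers_iff[OF \<alpha> \<beta>] B by blast+
  moreover from this have "B \<noteq> {}" using union_of_lines_mkblk_empty_iff[OF \<alpha>] p(2) by blast
  ultimately show "p \<in> union_map n \<alpha> O union_map n \<beta>" using p unfolding union_map_def by blast
next
  fix p assume "p \<in> union_map n \<alpha> O union_map n \<beta>"
  then obtain A B D where p: "p = (A, D)" "(A, B) \<in> union_map n \<alpha>" "(B, D) \<in> union_map n \<beta>" by blast
  then have "A \<in> nonempty_subsets n" "B \<in> nonempty_subsets n" "D \<in> nonempty_subsets n"
    using union_map_subset[OF \<alpha>] union_map_subset[OF \<beta>] by blast+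
  then have "block_closed \<alpha> \<beta> (layers A B D)" "mkblk A D \<subseteq> Xs n \<union> Xp n"
    using block_closed_layers_iff[OF \<alpha> \<beta>] p(2,3) mkblk_subset_iff
    unfolding union_map_def nonempty_subsets_def by auto
  then show "p \<in> union_map n (PIstar n \<alpha> \<beta>)"
    using union_of_lines_PIstar[OF \<alpha> \<beta>] p(1,2) unfolding union_map_def by blast
qed

lemma pbij_rep_PIbar:
  assumes "2 \<le> n" shows "pbij_rep (Pn n) (PIbar n) (nonempty_subsets n) (line_map n)"
proof
  show "2 \<le> card (nonempty_subsets n)" using two_le_card_nonempty_subsets[OF assms] .
  show "\<exists>t\<in>Pn n. line_map n t = (line_map n s)\<inverse>" if "s \<in> Pn n" for s
    using transp_part_Pn[OF that] line_map_transp_part[of n s] by blast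
  show "\<exists>s\<in>Pn n. line_map n s = {(A, D)}"
    if "A \<in> nonempty_subsets n" "D \<in> nonempty_subsets n" for A D
    using line_part_Pn[OF that] line_map_line_part[OF that] by blast
qed (simp_all add: PIbar_Pn line_map_PIbar inj_on_line_map line_map_subset pbij_line_map)

lemma pbij_rep_PIstar:
  assumes "2 \<le> n" shows "pbij_rep (Pn n) (PIstar n) (nonempty_subsets n) (union_map n)"
proof
  show "2 \<le> card (nonempty_subsets n)" using two_le_card_nonempty_subsets[OF assms] .
  show "\<exists>t\<in>Pn n. union_map n t = (union_map n s)\<inverse>" if "s \<in> Pn n" for s
    using transp_part_Pn[OF that] union_map_transp_part[OF that] by blast
  show "\<exists>s\<in>Pn n. union_map n s = {(A, D)}"
    if "A \<in> nonempty_subsets n" "D \<in> nonempty_subsets n" for A D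
    using line_part_Pn[OF that] union_map_line_part[OF that] by blast
qed (simp_all add: PIstar_Pn union_map_PIstar inj_on_union_map union_map_subset pbij_union_map)

theorem mainTheorem17:
  fixes n :: nat and mult :: "part \<Rightarrow> part \<Rightarrow> part"
  assumes "n \<ge> 2"
    and "mult = PIstar n \<or> mult = PIbar n"
  shows "\<exists>H. closed_inv_sub (Pn n) mult H
           \<and> inj_on (phi (Pn n) mult H) (Pn n)
           \<and> card (cosets (Pn n) mult H) = 2 ^ n - 1
           \<and> (\<forall>s\<in>Pn n. \<forall>t\<in>Pn n. phi (Pn n) mult H (mult s t) = phi (Pn n) mult H s O phi (Pn n) mult H t)
           \<and> (\<forall>K. closed_inv_sub (Pn n) mult K \<and> inj_on (phi (Pn n) mult K) (Pn n) \<longrightarrow>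
                  card (cosets (Pn n) mult K) = 2 ^ n - 1 \<and> rep_equiv (Pn n) mult H K)"
proof -
  obtain Phi where "pbij_rep (Pn n) mult (nonempty_subsets n) Phi"
    using assms pbij_rep_PIstar pbij_rep_PIbar by blast
  then interpret pbij_rep "Pn n" mult "nonempty_subsets n" Phi .
  show ?thesis using unique_faithful_transitive_rep unfolding card_nonempty_subsets .
qed

end
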